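(* Let $\mathcal{R}$ be a left-linear TRS, $M$ the set automaton constructed from $\mathcal{R}$, $t_0$ a ground term and $\mathit{select}$ a strategy. If $\textsc{Normalize}(t_0,\mathit{select})$ returns a term $t$, then $t$ is a normal form of $t_0$, i.e. $t_0\to^* t$ and $t$ has no redexes.
   Context: Terms: $\mathbb{F}$ finite ranked alphabet with arity $\#$, $\mathbb{V}$ variables. Positions are finite lists of positive integers; $\epsilon$ empty, $p.q$ concatenation. $\mathcal{D}(t)$ positions of $t$, $\mathcal{E}(t)$ variable positions, $t|_p$ subterm, $t[u]_p$ replacement, $\mathrm{hd}(t)$ head symbol. A TRS $\mathcal{R}$ is a finite nonempty set of rules $\ell\to r$ ($\ell\notin\mathbb{V}$, $\mathrm{vars}(r)\subseteq\mathrm{vars}(\ell)$), with left-hand sides $\mathcal{L}$; left-linear means no variable occurs twice in any left-hand side. A redex of $t$ is $(\ell\to r)@p$ with $\ell\to r\in\mathcal{R}$ and $t|_p=\ell^\sigma$ for some $\sigma$; $t[(\ell\to r)@p]$ denotes $t[r^\sigma]_p$; $\to$ is one-step rewriting, $\to^*$ its reflexive-transitive closure; a normal form has no redexes. Set automaton construction. $\mathrm{sub}(\mathcal{L})$: subterms $\ell|_q$, $\ell\in\mathcal{L}$, $q\in\mathcal{D}(\ell)\setminus\mathcal{E}(\ell)$. A match goal $\ell_1@p_1,\dots,\ell_n@p_n\hookrightarrow\ell@p$ ($n\ge1$) has nonempty obligation $mo=\{\ell_i@p_i\}$ ($\ell_i\in\mathrm{sub}(\mathcal{L})$) and announcement $\ell@p$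 ($\ell\in\mathcal{L}$); $\mathrm{pos}(mo)=\{p_i\}$. States are nonempty sets of goals; $s_0=\{\ell@\epsilon\hookrightarrow\ell@\epsilon\mid\ell\in\mathcal{L}\}$; $S$ = states reachable from $s_0$. Each state $s$ has a fixed label $L(s)\in\mathrm{pos}(mo)$ for some goal $mo\hookrightarrow\ell@\epsilon\in s$. $\mathrm{reduce}(mo,f,p)=\{\ell'@q\in mo\mid q\ne p\}\cup\{\ell'|_i@p.i\mid\ell'@p\in mo,1\le i\le\#f,\ell'|_i\notin\mathbb{V}\}$. $\mathrm{deriv}(s,f)$ is the union of $\{\mathrm{reduce}(mo,f,L(s))\hookrightarrow ma\mid mo\hookrightarrow ma\in s,\exists\ell'.\ell'@L(s)\in mo\wedge\mathrm{hd}(\ell')=f,\mathrm{reduce}(mo,f,L(s))\ne\emptyset\}$, $\{mo\hookrightarrow ma\in s\mid L(s)\notin\mathrm{pos}(mo)\}$ and $\{\ell@L(s).i\hookrightarrow\ell@L(s).i\mid\ell\in\mathcal{L},1\le i\le\#f\}$. Goals are directly dependent if their obligation positions intersect; dependency is its transitive closure. For a dependency class $K$ of $\mathrm{deriv}(s,f)$, $\mathrm{gcp}(K)$ is the greatest common prefix of its announcement positions and $\mathrm{lift}(K)$ removes that prefix from all positions in $K$. $\delta(s,f)=\{(\mathrm{lift}(K),\mathrm{gcp}(K))\mid K\}$; $\mathit{out}(s,f)=\{(\ell\to r)@p\mid\ell\to r\in\mathcal{R},f(x_1,\dots,x_{\#f})@L(s)\hookrightarrow\ell@p\in s,x_i\in\mathbb{V}\}$.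 Configuration trees: $ct::=\mathit{bud}(s,p)\mid\mathit{node}(s,p,cts)$, $cts$ a finite possibly empty set of configuration trees; $\mathit{buds}(ct)$, $\mathit{nodes}(ct)$ are the configurations labelling bud/node vertices. $\mathit{grow}(ct,s,p,t)$ replaces every $\mathit{bud}(s,p)$ in $ct$ by $\mathit{node}(s,p,\{\mathit{bud}(s',p.p')\mid(s',p')\in\delta(s,\mathrm{hd}(t|_{p.L(s)}))\})$. $\mathit{prune}(\mathit{bud}(s,p),q)=\mathit{bud}(s,p)$; $\mathit{prune}(\mathit{node}(s,p,cts),q)=\mathit{bud}(s,p)$ if $p.L(s)=q$, else $\mathit{node}(s,p,\{\mathit{prune}(c,q)\mid c\in cts\})$. $ct[p]$ is the subtree of $ct$ whose root configuration $(s,q)$ has $q.L(s)=p$. $\mathit{matches}(s,p,t)=\{(\ell\to r)@p.q\mid(\ell\to r)@q\in\mathit{out}(s,\mathrm{hd}(t|_{p.L(s)}))\}$. Strategy: a partial function $\mathit{select}$ mapping $(ct,reds)$ with $\mathit{buds}(ct)\cup reds\neq\emptyset$ to an element of $\mathit{buds}(ct)\cup reds$. Procedure $\textsc{Normalize}(t_0,\mathit{select})$: set $t:=t_0$, $reds:=\emptyset$, $ct:=\mathit{bud}(s_0,\epsilon)$. While $\mathit{buds}(ct)\ne\emptyset$ or $reds\ne\emptyset$: let $a=\mathit{select}(ct,reds)$. If $a$ is a configuration $(s,p)$: $ct:=\mathit{grow}(ct,s,p,t)$, then $reds:=reds\cup\mathit{matches}(s,p,t)$. If $a$ is a redex $(\ell\to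 r)@p\in reds$: $reds:=reds\setminus\bigcup\{\mathit{matches}(s,q,t)\mid(s,q)\in\mathit{nodes}(ct[p])\}$, then $ct:=\mathit{prune}(ct,p)$, then $t:=t[(\ell\to r)@p]$. After the loop, return $t$. *)

theory Defs
  imports Main "HOL-Library.FSet" "HOL-Library.Sublist"
begin

datatype ('f,'v) "term" = Var 'v | Fun 'f "('f,'v) term list"

type_synonym pos = "nat list"  (* positions: lists of positive integers, children numbered from 1 *)

fun in_poss :: "pos \<Rightarrow> ('f,'v) term \<Rightarrow> bool" where
  "in_poss [] t = True"
| "in_poss (i#p) (Var x) = False"
| "in_poss (i#p) (Fun f ts) = (1 \<le> i \<and> i \<le> length ts \<and> in_poss p (ts ! (i - 1)))"

fun subt :: "('f,'v) term \<Rightarrow> pos \<Rightarrow> ('f,'v) term" where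
  "subt t [] = t"
| "subt (Fun f ts) (i#p) = subt (ts ! (i - 1)) p"
| "subt (Var x) (i#p) = Var x"

fun replace_at :: "('f,'v) term \<Rightarrow> pos \<Rightarrow> ('f,'v) term \<Rightarrow> ('f,'v) term" where
  "replace_at t [] u = u"
| "replace_at (Fun f ts) (i#p) u = Fun f (ts[i - 1 := replace_at (ts ! (i - 1)) p u])"
| "replace_at (Var x) (i#p) u = Var x"

fun hd_sym :: "('f,'v) term \<Rightarrow> 'f" where
  "hd_sym (Fun f ts) = f"

fun vars :: "('f,'v) term \<Rightarrow> 'v set" where
  "vars (Var x) = {x}"
| "vars (Fun f ts) = (\<Union>t\<in>set ts. vars t)"

fun subst :: "('v \<Rightarrow> ('f,'v) term) \<Rightarrow> ('f,'v) term \<Rightarrow> ('f,'v) term" where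
  "subst \<sigma> (Var x) = \<sigma> x"
| "subst \<sigma> (Fun f ts) = Fun f (map (subst \<sigma>) ts)"

fun wf_term :: "'f set \<Rightarrow> ('f \<Rightarrow> nat) \<Rightarrow> ('f,'v) term \<Rightarrow> bool" where
  "wf_term F ar (Var x) = True"
| "wf_term F ar (Fun f ts) = (f \<in> F \<and> length ts = ar f \<and> (\<forall>t\<in>set ts. wf_term F ar t))"

definition ground :: "('f,'v) term \<Rightarrow> bool" where
  "ground t \<longleftrightarrow> vars t = {}"

definition linear :: "('f,'v) term \<Rightarrow> bool" where
  "linear t \<longleftrightarrow> (\<forall>p q x. in_poss p t \<and> in_poss q t \<and> subt t p = Var x \<and> subt t q = Var x \<longrightarrow> p = q)"

type_synonym ('f,'v) rule = "('f,'v) term \<times> ('f,'v) term"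

definition trs :: "'f set \<Rightarrow> ('f \<Rightarrow> nat) \<Rightarrow> ('f,'v) rule set \<Rightarrow> bool" where
  "trs F ar R \<longleftrightarrow> finite R \<and> R \<noteq> {} \<and>
     (\<forall>(l,r)\<in>R. (\<forall>x. l \<noteq> Var x) \<and> vars r \<subseteq> vars l \<and> wf_term F ar l \<and> wf_term F ar r)"

definition left_linear :: "('f,'v) rule set \<Rightarrow> bool" where
  "left_linear R \<longleftrightarrow> (\<forall>(l,r)\<in>R. linear l)"

definition rstep :: "('f,'v) rule set \<Rightarrow> (('f,'v) term \<times> ('f,'v) term) set" where
  "rstep R = {(s,t). \<exists>l r p \<sigma>. (l,r) \<in> R \<and> in_poss p s \<and> subt s p = subst \<sigma> l
                        \<and> t = replace_at s p (subst \<sigma> r)}"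

definition NF :: "('f,'v) rule set \<Rightarrow> ('f,'v) term \<Rightarrow> bool" where
  "NF R t \<longleftrightarrow> \<not> (\<exists>l r p \<sigma>. (l,r) \<in> R \<and> in_poss p t \<and> subt t p = subst \<sigma> l)"

definition rewrite_at :: "('f,'v) term \<Rightarrow> ('f,'v) rule \<Rightarrow> pos \<Rightarrow> ('f,'v) term" where
  "rewrite_at t rl p = replace_at t p (subst (SOME \<sigma>. subt t p = subst \<sigma> (fst rl)) (snd rl))"

type_synonym ('f,'v) obl = "(('f,'v) term \<times> pos) set"
type_synonym ('f,'v) goal = "('f,'v) obl \<times> (('f,'v) term \<times> pos)"
type_synonym ('f,'v) state = "('f,'v) goal set"
type_synonym ('f,'v) redex = "('f,'v) rule \<times> pos"

definition lhss :: "('f,'v) rule set \<Rightarrow> ('f,'v) term set" where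
  "lhss R = fst ` R"

definition s0 :: "('f,'v) rule set \<Rightarrow> ('f,'v) state" where
  "s0 R = {({(l,[])}, (l,[])) | l. l \<in> lhss R}"

definition opos :: "('f,'v) obl \<Rightarrow> pos set" where
  "opos mo = snd ` mo"

definition reduce :: "('f \<Rightarrow> nat) \<Rightarrow> ('f,'v) obl \<Rightarrow> 'f \<Rightarrow> pos \<Rightarrow> ('f,'v) obl" where
  "reduce ar mo f p =
     {(l',q). (l',q) \<in> mo \<and> q \<noteq> p} \<union>
     {(subt l' [i], p @ [i]) | l' i. (l',p) \<in> mo \<and> 1 \<le> i \<and> i \<le> ar f \<and> in_poss [i] l'
                                   \<and> (\<forall>x. subt l' [i] \<noteq> Var x)}"

definition deriv :: "('f \<Rightarrow> nat) \<Rightarrow> ('f,'v) rule set \<Rightarrow> (('f,'v) state \<Rightarrow> pos)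
                     \<Rightarrow> ('f,'v) state \<Rightarrow> 'f \<Rightarrow> ('f,'v) state" where
  "deriv ar R L s f =
     {(reduce ar mo f (L s), ma) | mo ma. (mo,ma) \<in> s
        \<and> (\<exists>l' ts. (l', L s) \<in> mo \<and> l' = Fun f ts) \<and> reduce ar mo f (L s) \<noteq> {}}
   \<union> {(mo,ma). (mo,ma) \<in> s \<and> L s \<notin> opos mo}
   \<union> {({(l, L s @ [i])}, (l, L s @ [i])) | l i. l \<in> lhss R \<and> 1 \<le> i \<and> i \<le> ar f}"

definition dep_edge :: "('f,'v) state \<Rightarrow> (('f,'v) goal \<times> ('f,'v) goal) set" where
  "dep_edge D = {(g1,g2). g1 \<in> D \<and> g2 \<in> D \<and> opos (fst g1) \<inter> opos (fst g2) \<noteq> {}}"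

definition dep_classes :: "('f,'v) state \<Rightarrow> ('f,'v) state set" where
  "dep_classes D = {K. \<exists>g\<in>D. K = {g'. (g,g') \<in> (dep_edge D)\<^sup>*}}"

definition gcp :: "pos set \<Rightarrow> pos" where
  "gcp P = (SOME q. (\<forall>p\<in>P. prefix q p) \<and> (\<forall>q'. (\<forall>p\<in>P. prefix q' p) \<longrightarrow> prefix q' q))"

definition ann_pos :: "('f,'v) state \<Rightarrow> pos set" where
  "ann_pos K = (\<lambda>g. snd (snd g)) ` K"

definition lift :: "('f,'v) state \<Rightarrow> ('f,'v) state" where
  "lift K = (let n = length (gcp (ann_pos K)) in
     (\<lambda>(mo,(l,p)). ((\<lambda>(l',q). (l', drop n q)) ` mo, (l, drop n p))) ` K)"

definition delta :: "('f \<Rightarrow> nat) \<Rightarrow> ('f,'v) rule set \<Rightarrow> (('f,'v) state \<Rightarrow> pos)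
                     \<Rightarrow> ('f,'v) state \<Rightarrow> 'f \<Rightarrow> (('f,'v) state \<times> pos) set" where
  "delta ar R L s f = {(lift K, gcp (ann_pos K)) | K. K \<in> dep_classes (deriv ar R L s f)}"

definition out :: "('f \<Rightarrow> nat) \<Rightarrow> ('f,'v) rule set \<Rightarrow> (('f,'v) state \<Rightarrow> pos)
                   \<Rightarrow> ('f,'v) state \<Rightarrow> 'f \<Rightarrow> ('f,'v) redex set" where
  "out ar R L s f = {((l,r),p) | l r p. (l,r) \<in> R \<and>
     (\<exists>xs. length xs = ar f \<and> (\<forall>x\<in>set xs. \<exists>v. x = Var v) \<and> ({(Fun f xs, L s)}, (l,p)) \<in> s)}"

inductive_set reach :: "'f set \<Rightarrow> ('f \<Rightarrow> nat) \<Rightarrow> ('f,'v) rule set \<Rightarrow> (('f,'v) state \<Rightarrow> pos)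
                        \<Rightarrow> ('f,'v) state set"
  for F ar R L where
  init: "s0 R \<in> reach F ar R L"
| step: "s \<in> reach F ar R L \<Longrightarrow> f \<in> F \<Longrightarrow> (s',p') \<in> delta ar R L s f \<Longrightarrow> s' \<in> reach F ar R L"

definition valid_label :: "'f set \<Rightarrow> ('f \<Rightarrow> nat) \<Rightarrow> ('f,'v) rule set \<Rightarrow> (('f,'v) state \<Rightarrow> pos) \<Rightarrow> bool" where
  "valid_label F ar R L \<longleftrightarrow> (\<forall>s\<in>reach F ar R L. \<exists>mo l. (mo,(l,[])) \<in> s \<and> L s \<in> opos mo)"

datatype ('f,'v) ctree = Bud "('f,'v) state" pos | Node "('f,'v) state" pos "('f,'v) ctree fset"

primrec buds :: "('f,'v) ctree \<Rightarrow> (('f,'v) state \<times> pos) set" where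
  "buds (Bud s p) = {(s,p)}"
| "buds (Node s p cs) = \<Union>(fset (fimage buds cs))"

primrec nodes :: "('f,'v) ctree \<Rightarrow> (('f,'v) state \<times> pos) set" where
  "nodes (Bud s p) = {}"
| "nodes (Node s p cs) = insert (s,p) (\<Union>(fset (fimage nodes cs)))"

primrec subtrees :: "('f,'v) ctree \<Rightarrow> ('f,'v) ctree set" where
  "subtrees (Bud s p) = {Bud s p}"
| "subtrees (Node s p cs) = insert (Node s p cs) (\<Union>(fset (fimage subtrees cs)))"

fun root :: "('f,'v) ctree \<Rightarrow> ('f,'v) state \<times> pos" where
  "root (Bud s p) = (s,p)"
| "root (Node s p cs) = (s,p)"

primrec grow_rep :: "('f,'v) ctree fset \<Rightarrow> ('f,'v) state \<Rightarrow> pos \<Rightarrow> ('f,'v) ctree \<Rightarrow> ('f,'v) ctree" where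
  "grow_rep new s p (Bud s' p') = (if s' = s \<and> p' = p then Node s p new else Bud s' p')"
| "grow_rep new s p (Node s' p' cs) = Node s' p' (fimage (grow_rep new s p) cs)"

definition grow :: "('f \<Rightarrow> nat) \<Rightarrow> ('f,'v) rule set \<Rightarrow> (('f,'v) state \<Rightarrow> pos)
                    \<Rightarrow> ('f,'v) ctree \<Rightarrow> ('f,'v) state \<Rightarrow> pos \<Rightarrow> ('f,'v) term \<Rightarrow> ('f,'v) ctree" where
  "grow ar R L ct s p t =
     grow_rep (Abs_fset {Bud s' (p @ p') | s' p'. (s',p') \<in> delta ar R L s (hd_sym (subt t (p @ L s)))})
              s p ct"

primrec prune :: "(('f,'v) state \<Rightarrow> pos) \<Rightarrow> pos \<Rightarrow> ('f,'v) ctree \<Rightarrow> ('f,'v) ctree" where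
  "prune L q (Bud s p) = Bud s p"
| "prune L q (Node s p cs) = (if p @ L s = q then Bud s p else Node s p (fimage (prune L q) cs))"

definition nodes_at :: "(('f,'v) state \<Rightarrow> pos) \<Rightarrow> ('f,'v) ctree \<Rightarrow> pos \<Rightarrow> (('f,'v) state \<times> pos) set" where
  "nodes_at L ct p = \<Union>{nodes c | c. c \<in> subtrees ct \<and> snd (root c) @ L (fst (root c)) = p}"

definition matches :: "('f \<Rightarrow> nat) \<Rightarrow> ('f,'v) rule set \<Rightarrow> (('f,'v) state \<Rightarrow> pos)
                       \<Rightarrow> ('f,'v) state \<Rightarrow> pos \<Rightarrow> ('f,'v) term \<Rightarrow> ('f,'v) redex set" where
  "matches ar R L s p t = {(rl, p @ q) | rl q. (rl,q) \<in> out ar R L s (hd_sym (subt t (p @ L s)))}"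

type_synonym ('f,'v) selector =
  "('f,'v) ctree \<Rightarrow> ('f,'v) redex set \<Rightarrow> (('f,'v) state \<times> pos) + ('f,'v) redex"

definition strategy :: "('f,'v) selector \<Rightarrow> bool" where
  "strategy sel \<longleftrightarrow> (\<forall>ct reds. buds ct \<noteq> {} \<or> reds \<noteq> {} \<longrightarrow>
      (case sel ct reds of Inl c \<Rightarrow> c \<in> buds ct | Inr rd \<Rightarrow> rd \<in> reds))"

text \<open>norm_run ... t reds ct t': the while loop started in state (t, reds, ct) terminates returning t'.\<close>
inductive norm_run :: "('f \<Rightarrow> nat) \<Rightarrow> ('f,'v) rule set \<Rightarrow> (('f,'v) state \<Rightarrow> pos) \<Rightarrow> ('f,'v) selector
                       \<Rightarrow> ('f,'v) term \<Rightarrow> ('f,'v) redex set \<Rightarrow> ('f,'v) ctree \<Rightarrow> ('f,'v) term \<Rightarrow> bool"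
  for ar R L sel where
  stop: "buds ct = {} \<Longrightarrow> reds = {} \<Longrightarrow> norm_run ar R L sel t reds ct t"
| conf: "buds ct \<noteq> {} \<or> reds \<noteq> {} \<Longrightarrow> sel ct reds = Inl (s,p) \<Longrightarrow>
         norm_run ar R L sel t (reds \<union> matches ar R L s p t) (grow ar R L ct s p t) t' \<Longrightarrow>
         norm_run ar R L sel t reds ct t'"
| red:  "buds ct \<noteq> {} \<or> reds \<noteq> {} \<Longrightarrow> sel ct reds = Inr (rl,p) \<Longrightarrow>
         norm_run ar R L sel (rewrite_at t rl p)
            (reds - \<Union>{matches ar R L s q t | s q. (s,q) \<in> nodes_at L ct p})
            (prune L p ct) t' \<Longrightarrow>
         norm_run ar R L sel t reds ct t'"

definition normalize_returns :: "('f \<Rightarrow> nat) \<Rightarrow> ('f,'v) rule set \<Rightarrow> (('f,'v) state \<Rightarrow> pos)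
                                 \<Rightarrow> ('f,'v) selector \<Rightarrow> ('f,'v) term \<Rightarrow> ('f,'v) term \<Rightarrow> bool" where
  "normalize_returns ar R L sel t0 t \<longleftrightarrow> norm_run ar R L sel t0 {} (Bud (s0 R) []) t"

end

theory Submission
  imports Defs
begin

(* Normalize maintains an invariant linking the configuration tree, the pending redexes and the
   current term t. A configuration (s, p) is read at absolute positions by shifting the goals of
   s by p; its history is the set of positions read by its ancestors. Along every branch the
   goals are consistent with the symbols of t on the history, and complete: every left-hand side
   whose skeleton agrees with t on the history and reaches an obligation position is announced.
   Growing a bud preserves this because delta splits deriv into dependency classes, each of which
   is a shifted copy of a child. Rewriting at q changes t only below q; pruning turns the first
   reader of q on each branch back into a bud and discards the matches reported below it, while
   the root of a pruned subtree still covers every match pending inside it. So every match of a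
   left-hand side in t is always reported or pending in a bud, and t is a normal form once
   neither buds nor redexes remain. By left-linearity a reported skeleton match is a redex, so
   each step is a rewrite step. *)

section \<open>Positions, skeletons and replacement\<close>

fun fun_sym :: "('f,'v) term \<Rightarrow> 'f option" where
  "fun_sym (Var x) = None"
| "fun_sym (Fun f ts) = Some f"

definition fun_pos :: "('f,'v) term \<Rightarrow> pos \<Rightarrow> bool" where
  "fun_pos l w \<longleftrightarrow> in_poss w l \<and> fun_sym (subt l w) \<noteq> None"

definition skeleton_matches :: "('f,'v) term \<Rightarrow> ('f,'v) term \<Rightarrow> pos \<Rightarrow> bool" where
  "skeleton_matches l t y \<longleftrightarrow>
     (\<forall>w. fun_pos l w \<longrightarrow> in_poss (y @ w) t \<and> fun_sym (subt t (y @ w)) = fun_sym (subt l w))"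

lemma subt_append: "subt t (p @ q) = subt (subt t p) q"
proof (induction t p rule: subt.induct)
  case (3 x i p)
  then show ?case by (cases q) auto
qed auto

lemma in_poss_append: "in_poss (p @ q) t \<longleftrightarrow> in_poss p t \<and> in_poss q (subt t p)"
  by (induction p t rule: in_poss.induct) auto

lemma in_poss_prefix: "in_poss q t \<Longrightarrow> prefix p q \<Longrightarrow> in_poss p t"
  by (auto simp: prefix_def in_poss_append)

lemma subt_Var: "subt (Var x) p = Var x"
  by (cases p) auto

lemma fun_pos_prefix:
  assumes "fun_pos l w" "prefix w' w"
  shows "fun_pos l w'"
proof -
  obtain r where w: "w = w' @ r" using assms(2) by (auto simp: prefix_def)
  then have "in_poss w' l" using assms(1) by (auto simp: fun_pos_def in_poss_append)
  moreover have "fun_sym (subt l w') \<noteq> None"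
  proof
    assume "fun_sym (subt l w') = None"
    then obtain x where "subt l w' = Var x" by (cases "subt l w'") auto
    with assms(1) w show False by (auto simp: fun_pos_def subt_append subt_Var)
  qed
  ultimately show ?thesis by (simp add: fun_pos_def)
qed

lemma hd_sym_eq: "fun_sym u = fun_sym v \<Longrightarrow> fun_sym u \<noteq> None \<Longrightarrow> hd_sym u = hd_sym v"
  by (cases u; cases v) auto

lemma strict_prefix_butlast: "strict_prefix q z \<Longrightarrow> prefix q (butlast z)"
  by (auto simp: strict_prefix_def prefix_def butlast_append)

lemma prefix_closed_butlast:
  assumes closed: "\<And>y. y \<in> h \<Longrightarrow> y \<noteq> [] \<Longrightarrow> butlast y \<in> h"
  shows "y \<in> h \<Longrightarrow> prefix q y \<Longrightarrow> q \<in> h"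
proof (induction "length y - length q" arbitrary: y)
  case 0
  then show ?case by (auto simp: prefix_def)
next
  case (Suc n)
  then have "strict_prefix q y" by (auto simp: strict_prefix_def)
  then have "y \<noteq> []" "prefix q (butlast y)" using strict_prefix_butlast by auto
  with Suc.hyps(1)[of "butlast y"] Suc.hyps(2) Suc.prems(1) closed show ?case by simp
qed

lemma wf_subt: "wf_term F ar t \<Longrightarrow> in_poss p t \<Longrightarrow> wf_term F ar (subt t p)"
  by (induction p t rule: in_poss.induct) auto

lemma vars_subt: "in_poss p t \<Longrightarrow> vars (subt t p) \<subseteq> vars t"
proof (induction p t rule: in_poss.induct)
  case (3 i p f ts)
  then have "ts ! (i - 1) \<in> set ts" by auto
  with 3 show ?case by auto
qed auto

lemma ground_fun_sym:
  assumes "ground t" "in_poss p t"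
  shows "fun_sym (subt t p) \<noteq> None"
proof -
  have "vars (subt t p) = {}" using assms vars_subt unfolding ground_def by blast
  then show ?thesis by (cases "subt t p") auto
qed

lemma in_poss_child:
  assumes "wf_term F ar t" "in_poss x t" "fun_sym (subt t x) = Some f"
  shows "in_poss (x @ [i]) t \<longleftrightarrow> 1 \<le> i \<and> i \<le> ar f"
proof -
  obtain ts where "subt t x = Fun f ts" using assms(3) by (cases "subt t x") auto
  moreover have "wf_term F ar (subt t x)" using wf_subt assms by blast
  ultimately show ?thesis using assms by (auto simp: in_poss_append)
qed

lemma replace_at_same: "in_poss p t \<Longrightarrow> in_poss p (replace_at t p u) \<and> subt (replace_at t p u) p = u"
  by (induction t p u rule: replace_at.induct) auto

lemma replace_at_other:
  "in_poss p t \<Longrightarrow> \<not> prefix p q \<Longrightarrow>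
   in_poss q (replace_at t p u) = in_poss q t \<and>
   (in_poss q t \<longrightarrow> fun_sym (subt (replace_at t p u) q) = fun_sym (subt t q))"
proof (induction q arbitrary: t p)
  case Nil
  then show ?case by (cases p; cases t) auto
next
  case (Cons i q)
  then obtain j p' where p: "p = j # p'" by (cases p) auto
  from Cons obtain f ts where t: "t = Fun f ts" using p by (cases t) auto
  show ?case
  proof (cases "i = j")
    case True
    with Cons p t have "in_poss p' (ts ! (j - 1))" "\<not> prefix p' q" by auto
    from Cons.IH[OF this] p t True Cons.prems show ?thesis by auto
  next
    case False
    then have "i - 1 \<noteq> j - 1 \<or> i = 0 \<or> j = 0" by auto
    with Cons p t False show ?thesis by (auto simp: nth_list_update)
  qed
qed

lemma wf_replace_at:
  "wf_term F ar t \<Longrightarrow> wf_term F ar u \<Longrightarrow> in_poss p t \<Longrightarrow> wf_term F ar (replace_at t p u)"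
proof (induction t p u rule: replace_at.induct)
  case (2 f ts i p u)
  then show ?case by (auto simp: set_update_memI dest!: set_update_subset_insert[THEN subsetD])
qed auto

lemma vars_replace_at: "in_poss p t \<Longrightarrow> vars (replace_at t p u) \<subseteq> vars t \<union> vars u"
proof (induction t p u rule: replace_at.induct)
  case (2 f ts i p u)
  then show ?case
    by (auto dest!: set_update_subset_insert[THEN subsetD])
      (metis One_nat_def Suc_le_eq Suc_pred' Un_iff nth_mem subsetD)
qed auto

lemma vars_subst: "vars (subst \<sigma> t) = (\<Union>x\<in>vars t. vars (\<sigma> x))"
  by (induction t) auto

lemma wf_subst_var: "wf_term F ar (subst \<sigma> t) \<Longrightarrow> x \<in> vars t \<Longrightarrow> wf_term F ar (\<sigma> x)"
  by (induction t) auto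

lemma wf_subst:
  "wf_term F ar t \<Longrightarrow> (\<And>x. x \<in> vars t \<Longrightarrow> wf_term F ar (\<sigma> x)) \<Longrightarrow> wf_term F ar (subst \<sigma> t)"
  by (induction t) auto

lemma subst_imp_skeleton_matches:
  assumes "in_poss y t" "subt t y = subst \<sigma> l"
  shows "skeleton_matches l t y"
  unfolding skeleton_matches_def
proof (intro allI impI)
  fix w assume "fun_pos l w"
  then have "in_poss w l" "fun_sym (subt l w) \<noteq> None" by (auto simp: fun_pos_def)
  then have "in_poss w (subst \<sigma> l) \<and> fun_sym (subt (subst \<sigma> l) w) = fun_sym (subt l w)"
  proof (induction w l rule: in_poss.induct)
    case (1 t) then show ?case by (cases t) auto
  qed auto
  then show "in_poss (y @ w) t \<and> fun_sym (subt t (y @ w)) = fun_sym (subt l w)"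
    using assms by (simp add: in_poss_append subt_append)
qed

lemma skeleton_matches_imp_subst:
  assumes lin: "linear l" and wfl: "wf_term F ar l" and wft: "wf_term F ar t"
    and sk: "skeleton_matches l t y"
  obtains \<sigma> where "subt t y = subst \<sigma> l"
proof -
  \<comment> \<open>linearity makes the position of each variable of l unique\<close>
  define \<sigma> where "\<sigma> x = subt t (y @ (SOME q. in_poss q l \<and> subt l q = Var x))" for x
  have "in_poss w l \<Longrightarrow> subt l w = l' \<Longrightarrow> subst \<sigma> l' = subt t (y @ w)" for w l'
  proof (induction l' arbitrary: w)
    case (Var x)
    then have "in_poss (SOME q. in_poss q l \<and> subt l q = Var x) l \<and>
        subt l (SOME q. in_poss q l \<and> subt l q = Var x) = Var x"
      by (intro someI[where P = "\<lambda>q. in_poss q l \<and> subt l q = Var x"]) simp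
    with Var lin have "(SOME q. in_poss q l \<and> subt l q = Var x) = w" unfolding linear_def by blast
    then show ?case by (simp add: \<sigma>_def)
  next
    case (Fun f ls)
    then have "fun_pos l w" by (simp add: fun_pos_def)
    with sk Fun.prems have ip: "in_poss (y @ w) t" and s: "fun_sym (subt t (y @ w)) = Some f"
      by (auto simp: skeleton_matches_def)
    then obtain us where us: "subt t (y @ w) = Fun f us" by (cases "subt t (y @ w)") auto
    have "wf_term F ar (Fun f us)" using wf_subt[OF wft ip] us by simp
    moreover have "wf_term F ar (Fun f ls)" using wf_subt[OF wfl] Fun.prems by fastforce
    ultimately have len: "length us = length ls" by simp
    have "map (subst \<sigma>) ls = us"
    proof (rule nth_equalityI)
      fix i assume "i < length (map (subst \<sigma>) ls)"
      then have i: "i < length ls" by simp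
      have "in_poss (w @ [Suc i]) l" "subt l (w @ [Suc i]) = ls ! i"
        using Fun.prems i by (simp_all add: in_poss_append subt_append)
      with Fun.IH[of "ls ! i"] i have "subst \<sigma> (ls ! i) = subt t (y @ w @ [Suc i])" by auto
      also have "\<dots> = us ! i" using us by (simp add: subt_append[of t "y @ w" "[Suc i]", simplified])
      finally show "map (subst \<sigma>) ls ! i = us ! i" using i by simp
    qed (use len in simp)
    then show ?case using us by simp
  qed
  from this[of "[]" l] have "subt t y = subst \<sigma> l" by simp
  then show ?thesis by (rule that)
qed

lemma skeleton_matches_replace_at:
  assumes q: "in_poss q t" and apart: "\<And>w. fun_pos l w \<Longrightarrow> \<not> prefix q (y @ w)"
  shows "skeleton_matches l (replace_at t q u) y \<longleftrightarrow> skeleton_matches l t y"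
  unfolding skeleton_matches_def using replace_at_other[OF q apart] by metis

lemma rewrite_at_subst:
  assumes "subt t q = subst \<sigma> l"
  obtains \<sigma>' where "subt t q = subst \<sigma>' l" "rewrite_at t (l,r) q = replace_at t q (subst \<sigma>' r)"
proof -
  have "subt t q = subst (SOME \<sigma>. subt t q = subst \<sigma> l) l" using assms by (rule someI[where P = "\<lambda>\<sigma>. subt t q = subst \<sigma> l"])
  with that show ?thesis by (simp add: rewrite_at_def)
qed

lemma rewrite_at_rstep:
  assumes "(l,r) \<in> R" "in_poss q t" "subt t q = subst \<sigma> l"
  shows "(t, rewrite_at t (l,r) q) \<in> rstep R"
proof -
  obtain \<sigma>' where "subt t q = subst \<sigma>' l" "rewrite_at t (l,r) q = replace_at t q (subst \<sigma>' r)"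
    using rewrite_at_subst[OF assms(3)] .
  with assms(1,2) show ?thesis unfolding rstep_def by blast
qed

lemma wf_ground_subst_rhs:
  assumes "wf_term F ar t" "ground t" "in_poss q t" "subt t q = subst \<sigma> l"
    and "wf_term F ar r" "vars r \<subseteq> vars l"
  shows "wf_term F ar (subst \<sigma> r) \<and> ground (subst \<sigma> r)"
proof
  have wfl: "wf_term F ar (subst \<sigma> l)" using wf_subt[OF assms(1,3)] assms(4) by simp
  show "wf_term F ar (subst \<sigma> r)" using wf_subst[OF assms(5)] wf_subst_var[OF wfl] assms(6) by blast
  have "vars (subst \<sigma> l) = {}" using assms(2-4) vars_subt[OF assms(3)] by (simp add: ground_def)
  then show "ground (subst \<sigma> r)" using assms(6) by (auto simp: ground_def vars_subst)
qed
section \<open>Configuration trees\<close>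

fun reads_at :: "(('f,'v) state \<Rightarrow> pos) \<Rightarrow> pos \<Rightarrow> ('f,'v) ctree \<Rightarrow> bool" where
  "reads_at L q (Bud s p) = False"
| "reads_at L q (Node s p cs) = (p @ L s = q)"

fun is_node :: "('f,'v) ctree \<Rightarrow> bool" where
  "is_node (Bud s p) = False"
| "is_node (Node s p cs) = True"

definition read_pos :: "(('f,'v) state \<Rightarrow> pos) \<Rightarrow> ('f,'v) ctree \<Rightarrow> pos" where
  "read_pos L c = snd (root c) @ L (fst (root c))"

text \<open>\<open>(a, w) \<in> paths ct\<close>: \<open>w\<close> is a subtree of \<open>ct\<close> and \<open>a\<close> lists its proper ancestors,
  starting from the root.\<close>

primrec paths :: "('f,'v) ctree \<Rightarrow> (('f,'v) ctree list \<times> ('f,'v) ctree) set" where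
  "paths (Bud s p) = {([], Bud s p)}"
| "paths (Node s p cs) = insert ([], Node s p cs)
     (\<Union>(fset (fimage (\<lambda>c. (\<lambda>(a,w). (Node s p cs # a, w)) ` paths c) cs)))"

lemma paths_root: "([], ct) \<in> paths ct"
  by (cases ct) auto

lemma paths_props:
  "(a, w) \<in> paths ct \<Longrightarrow> (\<forall>u\<in>set a. is_node u \<and> u \<in> subtrees ct \<and> w \<in> subtrees u) \<and> w \<in> subtrees ct"
proof (induction ct arbitrary: a w)
  case (Bud s p)
  then show ?case by auto
next
  case (Node s p cs)
  show ?case
  proof (cases "a = []")
    case True
    with Node.prems show ?thesis by auto
  next
    case False
    with Node.prems obtain c a' where c: "c \<in> fset cs" "(a', w) \<in> paths c" "a = Node s p cs # a'"
      by auto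
    from Node.IH[OF c(1) c(2)] c show ?thesis by auto
  qed
qed

lemma paths_bud: "(s,p) \<in> buds ct \<longleftrightarrow> (\<exists>a. (a, Bud s p) \<in> paths ct)"
proof (induction ct)
  case (Bud s' p')
  then show ?case by auto
next
  case (Node s' p' cs)
  show ?case
  proof
    assume "(s,p) \<in> buds (Node s' p' cs)"
    then obtain c where c: "c \<in> fset cs" "(s,p) \<in> buds c" by auto
    with Node.IH obtain a where "(a, Bud s p) \<in> paths c" by blast
    with c show "\<exists>a. (a, Bud s p) \<in> paths (Node s' p' cs)" by force
  next
    assume "\<exists>a. (a, Bud s p) \<in> paths (Node s' p' cs)"
    then obtain a where "(a, Bud s p) \<in> paths (Node s' p' cs)" by blast
    then obtain c a' where c: "c \<in> fset cs" "(a', Bud s p) \<in> paths c" by auto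
    with Node.IH show "(s,p) \<in> buds (Node s' p' cs)" by auto
  qed
qed

lemma paths_node: "(s,p) \<in> nodes ct \<longleftrightarrow> (\<exists>a cs. (a, Node s p cs) \<in> paths ct)"
proof (induction ct)
  case (Bud s' p')
  then show ?case by auto
next
  case (Node s' p' cs')
  show ?case
  proof
    assume "(s,p) \<in> nodes (Node s' p' cs')"
    then have "(s,p) = (s',p') \<or> (\<exists>c\<in>fset cs'. (s,p) \<in> nodes c)" by simp
    then show "\<exists>a cs. (a, Node s p cs) \<in> paths (Node s' p' cs')"
    proof
      assume "(s,p) = (s',p')" then show ?thesis by (intro exI[of _ "[]"] exI[of _ cs']) simp
    next
      assume "\<exists>c\<in>fset cs'. (s,p) \<in> nodes c"
      then obtain c where c: "c \<in> fset cs'" "(s,p) \<in> nodes c" by blast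
      with Node.IH obtain a cs where "(a, Node s p cs) \<in> paths c" by blast
      with c show ?thesis
        by (intro exI[of _ "Node s' p' cs' # a"] exI[of _ cs]) (simp, rule bexI[of _ c], force, simp)
    qed
  next
    assume "\<exists>a cs. (a, Node s p cs) \<in> paths (Node s' p' cs')"
    then obtain a cs where a: "(a, Node s p cs) \<in> paths (Node s' p' cs')" by blast
    show "(s,p) \<in> nodes (Node s' p' cs')"
    proof (cases a)
      case Nil
      with a show ?thesis by auto
    next
      case (Cons u a')
      with a obtain c where c: "c \<in> fset cs'" "(a', Node s p cs) \<in> paths c" by auto
      with Node.IH[OF c(1)] have "(s,p) \<in> nodes c" by blast
      with c show ?thesis by auto
    qed
  qed
qed

lemma subtrees_nodes: "c \<in> subtrees ct \<Longrightarrow> nodes c \<subseteq> nodes ct \<and> buds c \<subseteq> buds ct"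
  by (induction ct) auto

lemma subtrees_self: "ct \<in> subtrees ct"
  by (cases ct) auto

lemma root_in_nodes: "is_node c \<Longrightarrow> root c \<in> nodes c"
  by (cases c) auto

lemma grow_root: "root (grow_rep new s p c) = root c"
  by (cases c) auto

lemma read_pos_grow: "read_pos L (grow_rep new s p c) = read_pos L c"
  by (simp add: read_pos_def grow_root)

lemma paths_NodeI: "(Node s p cs # a, w) \<in> paths (Node s p cs)" if "c \<in> fset cs" "(a,w) \<in> paths c"
proof -
  have "(Node s p cs # a, w) \<in> (\<lambda>(a,w). (Node s p cs # a, w)) ` paths c"
    by (rule image_eqI[of _ _ "(a,w)"]) (auto simp: that)
  then show ?thesis using that by (simp only: paths.simps fimage.rep_eq) blast
qed

lemma paths_bud_only: "\<not> is_node b \<Longrightarrow> paths b = {([], b)}"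
  by (cases b) auto

lemma paths_NodeE:
  assumes "(a,w) \<in> paths (Node s p cs)"
  shows "(a = [] \<and> w = Node s p cs) \<or> (\<exists>c a'. c \<in> fset cs \<and> (a',w) \<in> paths c \<and> a = Node s p cs # a')"
proof -
  have "(a,w) = ([], Node s p cs) \<or> (\<exists>c\<in>fset cs. (a,w) \<in> (\<lambda>(a,w). (Node s p cs # a, w)) ` paths c)"
    using assms by (simp only: paths.simps fimage.rep_eq) blast
  then show ?thesis
  proof
    assume "\<exists>c\<in>fset cs. (a,w) \<in> (\<lambda>(a,w). (Node s p cs # a, w)) ` paths c"
    then obtain c x where "c \<in> fset cs" "x \<in> paths c" "(a,w) = (\<lambda>(a,w). (Node s p cs # a, w)) x" by blast
    then show ?thesis by (cases x) auto
  qed auto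
qed

lemma paths_grow_origin:
  assumes "(a', w') \<in> paths (grow_rep new s p ct)" "\<forall>b\<in>fset new. \<not> is_node b"
  shows "(\<exists>a w. (a,w) \<in> paths ct \<and> a' = map (grow_rep new s p) a \<and> w' = grow_rep new s p w)
       \<or> (\<exists>a. (a, Bud s p) \<in> paths ct \<and> w' \<in> fset new \<and> a' = map (grow_rep new s p) a @ [Node s p new])"
  using assms
proof (induction ct arbitrary: a' w')
  case (Bud s' p')
  show ?case
  proof (cases "s' = s \<and> p' = p")
    case True
    with Bud have "(a', w') \<in> paths (Node s p new)" by simp
    from paths_NodeE[OF this] show ?thesis
    proof
      assume "a' = [] \<and> w' = Node s p new"
      with True show ?thesis
        by (intro disjI1 exI[of _ "[]"] exI[of _ "Bud s p"]) simp
    next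
      assume "\<exists>c a''. c \<in> fset new \<and> (a'', w') \<in> paths c \<and> a' = Node s p new # a''"
      then obtain c a'' where c: "c \<in> fset new" "(a'', w') \<in> paths c" "a' = Node s p new # a''" by blast
      with Bud.prems(2) have "paths c = {([], c)}" using paths_bud_only by blast
      with c have "a'' = []" "w' = c" by auto
      with c True show ?thesis by (intro disjI2 exI[of _ "[]"]) simp
    qed
  next
    case False
    with Bud have "a' = []" "w' = Bud s' p'" by auto
    with False show ?thesis by (intro disjI1 exI[of _ "[]"] exI[of _ "Bud s' p'"]) simp
  qed
next
  case (Node s' p' cs)
  have "(a', w') \<in> paths (Node s' p' (fimage (grow_rep new s p) cs))" using Node.prems(1) by simp
  from paths_NodeE[OF this] show ?case
  proof
    assume "a' = [] \<and> w' = Node s' p' (fimage (grow_rep new s p) cs)"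
    then show ?thesis by (intro disjI1 exI[of _ "[]"] exI[of _ "Node s' p' cs"]) simp
  next
    assume "\<exists>c a''. c \<in> fset (fimage (grow_rep new s p) cs) \<and> (a'', w') \<in> paths c \<and> a' = Node s' p' (fimage (grow_rep new s p) cs) # a''"
    then obtain c0 a'' where c0: "c0 \<in> fset (fimage (grow_rep new s p) cs)" "(a'', w') \<in> paths c0" "a' = Node s' p' (fimage (grow_rep new s p) cs) # a''"
      by blast
    then obtain c where c: "c \<in> fset cs" "c0 = grow_rep new s p c" by (auto simp: fimage.rep_eq)
    have gN: "grow_rep new s p (Node s' p' cs) = Node s' p' (fimage (grow_rep new s p) cs)" by simp
    have "(a'', w') \<in> paths (grow_rep new s p c)" using c0 c by simp
    from Node.IH[OF c(1) this Node.prems(2)] show ?thesis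
    proof (elim disjE exE conjE)
      fix a w assume "(a, w) \<in> paths c" "a'' = map (grow_rep new s p) a" "w' = grow_rep new s p w"
      then show ?thesis using c0 c paths_NodeI[OF c(1), of a w s' p'] gN
        by (intro disjI1 exI[of _ "Node s' p' cs # a"] exI[of _ w]) simp
    next
      fix a assume "(a, Bud s p) \<in> paths c" "w' \<in> fset new" "a'' = map (grow_rep new s p) a @ [Node s p new]"
      then show ?thesis using c0 c paths_NodeI[OF c(1), of a "Bud s p" s' p'] gN
        by (intro disjI2 exI[of _ "Node s' p' cs # a"]) simp
    qed
  qed
qed

lemma grow_subtrees:
  "c' \<in> subtrees (grow_rep new s p ct) \<Longrightarrow> (\<exists>c\<in>subtrees ct. c' = grow_rep new s p c) \<or> (c' \<in> (\<Union>b\<in>fset new. subtrees b) \<and> (s,p) \<in> buds ct)"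
  by (induction ct) (auto split: if_splits)

lemma grow_nodes_buds:
  "x \<in> nodes (grow_rep new s p c) \<union> buds (grow_rep new s p c) \<Longrightarrow>
   x \<in> nodes c \<union> buds c \<or> ((s,p) \<in> buds c \<and> (\<exists>b\<in>fset new. x \<in> nodes b \<union> buds b))"
proof (induction c)
  case (Bud s' p')
  then show ?case by (auto split: if_splits)
next
  case (Node s' p' cs)
  from Node.prems have "x = (s',p') \<or> (\<exists>c\<in>fset cs. x \<in> nodes (grow_rep new s p c) \<union> buds (grow_rep new s p c))"
    by (auto simp: fimage.rep_eq)
  then show ?case
  proof
    assume "\<exists>c\<in>fset cs. x \<in> nodes (grow_rep new s p c) \<union> buds (grow_rep new s p c)"
    then obtain c where c: "c \<in> fset cs" "x \<in> nodes (grow_rep new s p c) \<union> buds (grow_rep new s p c)" by blast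
    from Node.IH[OF c] c(1) show ?thesis by auto
  qed simp
qed

lemma grow_buds_keep:
  "(s',p') \<in> buds ct \<Longrightarrow> (s',p') \<noteq> (s,p) \<Longrightarrow> (s',p') \<in> buds (grow_rep new s p ct)"
  by (induction ct) auto

lemma nodes_grow: "nodes ct \<subseteq> nodes (grow_rep new s p ct)"
  by (induction ct) auto

lemma bud_in_nodes_grow: "(s,p) \<in> buds ct \<Longrightarrow> (s,p) \<in> nodes (grow_rep new s p ct)"
  by (induction ct) auto

lemma grow_buds_new:
  "(s,p) \<in> buds ct \<Longrightarrow> b \<in> fset new \<Longrightarrow> buds b \<subseteq> buds (grow_rep new s p ct)"
  by (induction ct) auto

lemma prune_root: "root (prune L q c) = root c"
  by (cases c) auto

lemma read_pos_prune: "read_pos L (prune L q c) = read_pos L c"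
  by (simp add: read_pos_def prune_root)

lemma reads_at_iff_read_pos: "is_node c \<Longrightarrow> reads_at L q c \<longleftrightarrow> read_pos L c = q"
  by (cases c) (auto simp: read_pos_def)

lemma paths_prune_unread:
  "(a, w) \<in> paths ct \<Longrightarrow> \<forall>u\<in>set a. \<not> reads_at L q u \<Longrightarrow> (map (prune L q) a, prune L q w) \<in> paths (prune L q ct)"
proof (induction ct arbitrary: a w)
  case (Bud s' p')
  then show ?case by auto
next
  case (Node s' p' cs)
  from paths_NodeE[OF Node.prems(1)] show ?case
  proof
    assume "a = [] \<and> w = Node s' p' cs"
    then show ?thesis using paths_root by simp
  next
    assume "\<exists>c a'. c \<in> fset cs \<and> (a', w) \<in> paths c \<and> a = Node s' p' cs # a'"
    then obtain c a' where c: "c \<in> fset cs" "(a', w) \<in> paths c" "a = Node s' p' cs # a'" by blast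
    with Node.prems have nq: "\<not> p' @ L s' = q" "\<forall>u\<in>set a'. \<not> reads_at L q u" by auto
    have IH: "(map (prune L q) a', prune L q w) \<in> paths (prune L q c)" using Node.IH[OF c(1) c(2) nq(2)] .
    have "prune L q c \<in> fset (fimage (prune L q) cs)" using c(1) by (simp add: fimage.rep_eq)
    from paths_NodeI[OF this IH, of s' p'] nq(1) c(3) show ?thesis by simp
  qed
qed

lemma paths_prune_origin:
  "(a', w') \<in> paths (prune L q ct) \<Longrightarrow> \<exists>a w. (a, w) \<in> paths ct \<and> (\<forall>u\<in>set a. \<not> reads_at L q u) \<and> a' = map (prune L q) a \<and> w' = prune L q w"
proof (induction ct arbitrary: a' w')
  case (Bud s' p')
  then show ?case by (intro exI[of _ "[]"] exI[of _ "Bud s' p'"]) auto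
next
  case (Node s' p' cs)
  show ?case
  proof (cases "p' @ L s' = q")
    case True
    with Node.prems have "a' = []" "w' = Bud s' p'" by auto
    with True show ?thesis by (intro exI[of _ "[]"] exI[of _ "Node s' p' cs"]) (simp add: paths_root)
  next
    case False
    with Node.prems have "(a', w') \<in> paths (Node s' p' (fimage (prune L q) cs))" by simp
    from paths_NodeE[OF this] show ?thesis
    proof
      assume "a' = [] \<and> w' = Node s' p' (fimage (prune L q) cs)"
      with False show ?thesis by (intro exI[of _ "[]"] exI[of _ "Node s' p' cs"]) (simp add: paths_root)
    next
      assume "\<exists>c a''. c \<in> fset (fimage (prune L q) cs) \<and> (a'', w') \<in> paths c \<and> a' = Node s' p' (fimage (prune L q) cs) # a''"
      then obtain c0 a'' where c0: "c0 \<in> fset (fimage (prune L q) cs)" "(a'', w') \<in> paths c0" "a' = Node s' p' (fimage (prune L q) cs) # a''"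
        by blast
      then obtain c where c: "c \<in> fset cs" "c0 = prune L q c" by (auto simp: fimage.rep_eq)
      with c0 have "(a'', w') \<in> paths (prune L q c)" by simp
      from Node.IH[OF c(1) this] obtain a w where aw: "(a, w) \<in> paths c" "\<forall>u\<in>set a. \<not> reads_at L q u" "a'' = map (prune L q) a" "w' = prune L q w"
        by blast
      have "(Node s' p' cs # a, w) \<in> paths (Node s' p' cs)" by (rule paths_NodeI[OF c(1) aw(1)])
      with aw c0 False show ?thesis by (intro exI[of _ "Node s' p' cs # a"] exI[of _ w]) simp
    qed
  qed
qed

lemma prune_first_reader:
  "c \<in> subtrees ct \<Longrightarrow> reads_at L q c \<Longrightarrow>
   \<exists>c0\<in>subtrees ct. reads_at L q c0 \<and> c \<in> subtrees c0 \<and> root c0 \<in> buds (prune L q ct)"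
proof (induction ct)
  case (Bud s p)
  then show ?case by auto
next
  case (Node s p cs)
  show ?case
  proof (cases "p @ L s = q")
    case True
    then have "root (Node s p cs) \<in> buds (prune L q (Node s p cs))" by simp
    with Node.prems True show ?thesis by (intro bexI[of _ "Node s p cs"]) (auto simp: subtrees_self)
  next
    case False
    with Node.prems have "c \<noteq> Node s p cs" by auto
    with Node.prems obtain c' where c': "c' \<in> fset cs" "c \<in> subtrees c'" by auto
    from Node.IH[OF c' Node.prems(2)] obtain c0 where c0: "c0 \<in> subtrees c'" "reads_at L q c0" "c \<in> subtrees c0" "root c0 \<in> buds (prune L q c')"
      by blast
    have "buds (prune L q c') \<subseteq> buds (prune L q (Node s p cs))"
      using False c'(1) by (auto simp: fimage.rep_eq)
    moreover have "c0 \<in> subtrees (Node s p cs)" using c0(1) c'(1) by auto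
    ultimately show ?thesis using c0 by blast
  qed
qed

lemma prune_buds:
  "(s,p) \<in> buds ct \<Longrightarrow> (s,p) \<in> buds (prune L q ct) \<or> (\<exists>c\<in>subtrees ct. reads_at L q c \<and> (s,p) \<in> buds c)"
proof (induction ct)
  case (Bud s' p')
  then show ?case by auto
next
  case (Node s' p' cs)
  show ?case
  proof (cases "p' @ L s' = q")
    case True
    with Node.prems show ?thesis by (intro disjI2 bexI[of _ "Node s' p' cs"]) (auto simp: subtrees_self)
  next
    case False
    with Node.prems obtain c where c: "c \<in> fset cs" "(s,p) \<in> buds c" by auto
    from Node.IH[OF c] show ?thesis
    proof
      assume "(s, p) \<in> buds (prune L q c)"
      with False c show ?thesis by (auto simp: fimage.rep_eq)
    next
      assume "\<exists>c'\<in>subtrees c. reads_at L q c' \<and> (s, p) \<in> buds c'"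
      with c show ?thesis by auto
    qed
  qed
qed

lemma prune_subtrees: "c' \<in> subtrees (prune L q ct) \<Longrightarrow> \<exists>c\<in>subtrees ct. c' = prune L q c"
proof (induction ct)
  case (Bud s p)
  then show ?case by auto
next
  case (Node s p cs)
  show ?case
  proof (cases "p @ L s = q")
    case True
    with Node.prems show ?thesis by (intro bexI[of _ "Node s p cs"]) (auto simp: subtrees_self)
  next
    case False
    with Node.prems have "c' = prune L q (Node s p cs) \<or> (\<exists>c\<in>fset cs. c' \<in> subtrees (prune L q c))"
      by (auto simp: fimage.rep_eq)
    then show ?thesis
    proof
      assume "\<exists>c\<in>fset cs. c' \<in> subtrees (prune L q c)"
      then obtain c where c: "c \<in> fset cs" "c' \<in> subtrees (prune L q c)" by blast
      from Node.IH[OF c] c(1) show ?thesis by auto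
    qed (auto simp: subtrees_self)
  qed
qed

lemma prune_nodes_buds: "x \<in> nodes (prune L q c) \<union> buds (prune L q c) \<Longrightarrow> x \<in> nodes c \<union> buds c"
proof (induction c)
  case (Bud s p)
  then show ?case by auto
next
  case (Node s p cs)
  show ?case
  proof (cases "p @ L s = q")
    case True
    with Node.prems show ?thesis by auto
  next
    case False
    with Node.prems have "x = (s,p) \<or> (\<exists>c\<in>fset cs. x \<in> nodes (prune L q c) \<union> buds (prune L q c))"
      by (auto simp: fimage.rep_eq)
    then show ?thesis
    proof
      assume "\<exists>c\<in>fset cs. x \<in> nodes (prune L q c) \<union> buds (prune L q c)"
      then obtain c where c: "c \<in> fset cs" "x \<in> nodes (prune L q c) \<union> buds (prune L q c)" by blast
      from Node.IH[OF c] c(1) show ?thesis by auto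
    qed simp
  qed
qed

lemma nodes_at_intro:
  assumes "u \<in> subtrees ct" "reads_at L q u" "v \<in> subtrees u" "is_node v"
  shows "root v \<in> nodes_at L ct q"
proof -
  obtain s p cs where u: "u = Node s p cs" "p @ L s = q" using assms(2) by (cases u) auto
  have "root v \<in> nodes u" using root_in_nodes[OF assms(4)] subtrees_nodes[OF assms(3)] by blast
  moreover have "snd (root u) @ L (fst (root u)) = q" using u by simp
  ultimately show ?thesis unfolding nodes_at_def using assms(1) by blast
qed
section \<open>Goals at absolute positions\<close>

definition shift_obl :: "pos \<Rightarrow> ('f,'v) obl \<Rightarrow> ('f,'v) obl" where
  "shift_obl p mo = (\<lambda>(l',w). (l', p @ w)) ` mo"

definition shift_goal :: "pos \<Rightarrow> ('f,'v) goal \<Rightarrow> ('f,'v) goal" where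
  "shift_goal p g = (shift_obl p (fst g), (fst (snd g), p @ snd (snd g)))"

text \<open>A configuration \<open>(s, p)\<close> stores the goals of \<open>s\<close> relative to \<open>p\<close>; \<open>abs_goals s p\<close>
  places them at absolute positions of the term.\<close>

definition abs_goals :: "('f,'v) state \<Rightarrow> pos \<Rightarrow> ('f,'v) state" where
  "abs_goals s p = shift_goal p ` s"

definition obl_pos :: "('f,'v) state \<Rightarrow> pos set" where
  "obl_pos G = {z. \<exists>mo ma l'. (mo,ma) \<in> G \<and> (l',z) \<in> mo}"

definition wf_goals :: "('f,'v) rule set \<Rightarrow> ('f,'v) state \<Rightarrow> bool" where
  "wf_goals R s \<longleftrightarrow> (\<forall>mo l a. (mo,(l,a)) \<in> s \<longrightarrow> l \<in> lhss R \<and> mo \<noteq> {} \<and>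
      (\<forall>l' z. (l',z) \<in> mo \<longrightarrow> (\<exists>w. z = a @ w \<and> fun_pos l w \<and> subt l w = l')))"

definition has_fresh_goals :: "('f,'v) rule set \<Rightarrow> ('f,'v) state \<Rightarrow> bool" where
  "has_fresh_goals R s \<longleftrightarrow> (\<forall>mo ma l' z l0. (mo,ma) \<in> s \<longrightarrow> (l',z) \<in> mo \<longrightarrow> l0 \<in> lhss R \<longrightarrow> ({(l0,z)},(l0,z)) \<in> s)"

definition state_inv :: "('f,'v) rule set \<Rightarrow> ('f,'v) state \<Rightarrow> bool" where
  "state_inv R s \<longleftrightarrow> finite s \<and> wf_goals R s \<and> has_fresh_goals R s"

lemma shift_obl_mem: "(l', z) \<in> shift_obl p mo \<longleftrightarrow> (\<exists>w. z = p @ w \<and> (l', w) \<in> mo)"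
  by (auto simp: shift_obl_def)

lemma shift_obl_empty[simp]: "shift_obl p mo = {} \<longleftrightarrow> mo = {}"
  by (auto simp: shift_obl_def)

lemma shift_obl_inj: "shift_obl p mo = shift_obl p mo' \<Longrightarrow> mo = mo'"
proof -
  assume e: "shift_obl p mo = shift_obl p mo'"
  have "(l',w) \<in> mo \<longleftrightarrow> (l',w) \<in> mo'" for l' w
  proof -
    have "(l',w) \<in> mo \<longleftrightarrow> (l', p @ w) \<in> shift_obl p mo" by (simp add: shift_obl_mem)
    also have "\<dots> \<longleftrightarrow> (l', p @ w) \<in> shift_obl p mo'" using e by simp
    also have "\<dots> \<longleftrightarrow> (l',w) \<in> mo'" by (simp add: shift_obl_mem)
    finally show ?thesis .
  qed
  then show ?thesis by auto
qed

lemma shift_goal_simp[simp]: "shift_goal p (mo,(l,a)) = (shift_obl p mo, (l, p @ a))"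
  by (simp add: shift_goal_def)

lemma shift_goal_inj: "shift_goal p g = shift_goal p g' \<Longrightarrow> g = g'"
  by (cases g; cases g') (auto dest: shift_obl_inj)

lemma shift_obl_append: "shift_obl (p @ q) mo = shift_obl p (shift_obl q mo)"
  by (auto simp: shift_obl_def image_image case_prod_beta)

lemma shift_obl_Nil[simp]: "shift_obl [] mo = mo"
  by (auto simp: shift_obl_def)

lemma shift_obl_singleton[simp]: "shift_obl p {(l,z)} = {(l, p @ z)}"
  by (simp add: shift_obl_def)

lemma abs_goals_mem: "(MO,(l,Y)) \<in> abs_goals s p \<longleftrightarrow> (\<exists>mo a. (mo,(l,a)) \<in> s \<and> MO = shift_obl p mo \<and> Y = p @ a)"
proof
  assume "(MO,(l,Y)) \<in> abs_goals s p"
  then obtain g where "g \<in> s" "(MO,(l,Y)) = shift_goal p g" by (auto simp: abs_goals_def)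
  then show "\<exists>mo a. (mo,(l,a)) \<in> s \<and> MO = shift_obl p mo \<and> Y = p @ a" by (cases g) auto
next
  assume "\<exists>mo a. (mo,(l,a)) \<in> s \<and> MO = shift_obl p mo \<and> Y = p @ a"
  then obtain mo a where "(mo,(l,a)) \<in> s" "MO = shift_obl p mo" "Y = p @ a" by blast
  then show "(MO,(l,Y)) \<in> abs_goals s p" unfolding abs_goals_def by (force intro: image_eqI[of _ _ "(mo,(l,a))"])
qed

lemma abs_goals_memE:
  assumes "G \<in> abs_goals s p"
  obtains MO l Y mo a where "G = (MO,(l,Y))" "(mo,(l,a)) \<in> s" "MO = shift_obl p mo" "Y = p @ a"
  using assms by (cases G) (auto simp: abs_goals_mem)

lemma abs_goals_append: "abs_goals s (p @ q) = abs_goals (abs_goals s q) p"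
  by (auto simp: abs_goals_def shift_goal_def image_image shift_obl_append)

lemma abs_goals_Nil[simp]: "abs_goals s [] = s"
  by (auto simp: abs_goals_def shift_goal_def)

lemma wf_goals_abs_goals: "wf_goals R (abs_goals s p) \<longleftrightarrow> wf_goals R s"
proof
  assume w: "wf_goals R s"
  show "wf_goals R (abs_goals s p)"
    unfolding wf_goals_def
  proof (intro allI impI)
    fix MO l Y assume "(MO,(l,Y)) \<in> abs_goals s p"
    then obtain mo a where g: "(mo,(l,a)) \<in> s" "MO = shift_obl p mo" "Y = p @ a" by (auto simp: abs_goals_mem)
    with w show "l \<in> lhss R \<and> MO \<noteq> {} \<and> (\<forall>l' z. (l',z) \<in> MO \<longrightarrow> (\<exists>w. z = Y @ w \<and> fun_pos l w \<and> subt l w = l'))"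
      unfolding wf_goals_def by (auto simp: shift_obl_mem)
  qed
next
  assume w: "wf_goals R (abs_goals s p)"
  show "wf_goals R s"
    unfolding wf_goals_def
  proof (intro allI impI)
    fix mo l a assume g: "(mo,(l,a)) \<in> s"
    then have "(shift_obl p mo, (l, p @ a)) \<in> abs_goals s p" by (auto simp: abs_goals_mem)
    with w have "l \<in> lhss R \<and> shift_obl p mo \<noteq> {} \<and> (\<forall>l' z. (l',z) \<in> shift_obl p mo \<longrightarrow> (\<exists>w. z = (p @ a) @ w \<and> fun_pos l w \<and> subt l w = l'))"
      unfolding wf_goals_def by blast
    then show "l \<in> lhss R \<and> mo \<noteq> {} \<and> (\<forall>l' z. (l',z) \<in> mo \<longrightarrow> (\<exists>w. z = a @ w \<and> fun_pos l w \<and> subt l w = l'))"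
      by (auto simp: shift_obl_mem)
  qed
qed

lemma has_fresh_goals_abs_goals: "has_fresh_goals R (abs_goals s p) \<longleftrightarrow> has_fresh_goals R s"
proof
  assume w: "has_fresh_goals R s"
  show "has_fresh_goals R (abs_goals s p)"
    unfolding has_fresh_goals_def
  proof (intro allI impI)
    fix MO ma l' z l0 assume a: "(MO, ma) \<in> abs_goals s p" "(l', z) \<in> MO" "l0 \<in> lhss R"
    obtain l Y where ma: "ma = (l,Y)" by (cases ma)
    with a obtain mo b where g: "(mo,(l,b)) \<in> s" "MO = shift_obl p mo" by (auto simp: abs_goals_mem)
    with a obtain z' where z: "z = p @ z'" "(l',z') \<in> mo" by (auto simp: shift_obl_mem)
    with w g a have "({(l0,z')},(l0,z')) \<in> s" unfolding has_fresh_goals_def by blast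
    then show "({(l0, z)}, l0, z) \<in> abs_goals s p" using z by (force simp: abs_goals_mem)
  qed
next
  assume w: "has_fresh_goals R (abs_goals s p)"
  show "has_fresh_goals R s"
    unfolding has_fresh_goals_def
  proof (intro allI impI)
    fix mo ma l' z l0 assume a: "(mo, ma) \<in> s" "(l', z) \<in> mo" "l0 \<in> lhss R"
    obtain l b where ma: "ma = (l,b)" by (cases ma)
    with a have "(shift_obl p mo, (l, p @ b)) \<in> abs_goals s p" "(l', p @ z) \<in> shift_obl p mo" by (auto simp: abs_goals_mem shift_obl_mem)
    with w a have "({(l0, p @ z)},(l0,p @ z)) \<in> abs_goals s p" unfolding has_fresh_goals_def by blast
    then obtain mo' a' where "(mo',(l0,a')) \<in> s" "{(l0, p @ z)} = shift_obl p mo'" "p @ z = p @ a'" by (auto simp: abs_goals_mem)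
    moreover then have "mo' = {(l0, z)}" using shift_obl_inj[of p mo' "{(l0,z)}"] by simp
    ultimately show "({(l0, z)}, l0, z) \<in> s" by simp
  qed
qed

lemma state_inv_abs_goals: "state_inv R (abs_goals s p) \<longleftrightarrow> state_inv R s"
proof -
  have "finite (abs_goals s p) \<longleftrightarrow> finite s"
    unfolding abs_goals_def by (rule finite_image_iff) (meson inj_onI shift_goal_inj)
  then show ?thesis by (simp add: state_inv_def wf_goals_abs_goals has_fresh_goals_abs_goals)
qed

lemma gcp_exists:
  assumes "P \<noteq> {}"
  shows "\<exists>q. (\<forall>p\<in>P. prefix q p) \<and> (\<forall>q'. (\<forall>p\<in>P. prefix q' p) \<longrightarrow> prefix q' q)"
  using Longest_common_prefix_prefix Longest_common_prefix_max_prefix[OF assms] by blast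

lemma gcp_prefix: "P \<noteq> {} \<Longrightarrow> p \<in> P \<Longrightarrow> prefix (gcp P) p"
  unfolding gcp_def using someI_ex[OF gcp_exists] by blast

lemma shift_obl_drop:
  assumes "\<forall>(l',z)\<in>mo. prefix g z"
  shows "shift_obl g ((\<lambda>(l',z). (l', drop (length g) z)) ` mo) = mo"
proof -
  have "(\<lambda>(l',z). (l', g @ drop (length g) z)) ` mo = id ` mo"
    using assms by (intro image_cong) (auto simp: prefix_def)
  then show ?thesis by (simp add: shift_obl_def image_image case_prod_beta)
qed

lemma lift_abs_goals:
  assumes ne: "K \<noteq> {}" and wf: "wf_goals R K"
  shows "abs_goals (lift K) (gcp (ann_pos K)) = K"
proof -
  define g where "g = gcp (ann_pos K)"
  have below_gcp: "prefix g a \<and> (\<forall>(l',z)\<in>mo. prefix g z)" if x: "(mo,(l,a)) \<in> K" for mo l a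
  proof -
    have "a \<in> ann_pos K" using x unfolding ann_pos_def by force
    then have "prefix g a" unfolding g_def using gcp_prefix by blast
    moreover have "prefix a z" if "(l',z) \<in> mo" for l' z
      using wf x that unfolding wf_goals_def prefix_def by blast
    ultimately show ?thesis using prefix_order.trans by blast
  qed
  have "shift_goal g ((\<lambda>(mo,(l,p)). ((\<lambda>(l',q). (l', drop (length g) q)) ` mo, (l, drop (length g) p))) x) = x"
    if "x \<in> K" for x
  proof (cases x)
    case (fields mo l a)
    with that below_gcp have "prefix g a" "\<forall>(l',z)\<in>mo. prefix g z" by blast+
    then show ?thesis using fields shift_obl_drop by (auto simp: prefix_def)
  qed
  then show ?thesis unfolding lift_def Let_def g_def[symmetric] abs_goals_def image_image by simp
qed

lemma shift_obl_reduce: "shift_obl p (reduce ar mo f q) = reduce ar (shift_obl p mo) f (p @ q)"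
proof (rule set_eqI)
  fix y
  show "y \<in> shift_obl p (reduce ar mo f q) \<longleftrightarrow> y \<in> reduce ar (shift_obl p mo) f (p @ q)"
  proof (cases y)
    case (Pair l' z)
    then show ?thesis unfolding shift_obl_mem reduce_def by (auto simp: shift_obl_mem)
  qed
qed

definition deriv_abs :: "('f \<Rightarrow> nat) \<Rightarrow> ('f,'v) rule set \<Rightarrow> ('f,'v) state \<Rightarrow> 'f \<Rightarrow> pos \<Rightarrow> ('f,'v) state" where
  "deriv_abs ar R G f x =
     {(reduce ar MO f x, ma) | MO ma. (MO,ma) \<in> G
        \<and> (\<exists>l' ts. (l', x) \<in> MO \<and> l' = Fun f ts) \<and> reduce ar MO f x \<noteq> {}}
   \<union> {(MO,ma). (MO,ma) \<in> G \<and> x \<notin> snd ` MO}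
   \<union> {({(l, x @ [i])}, (l, x @ [i])) | l i. l \<in> lhss R \<and> 1 \<le> i \<and> i \<le> ar f}"

lemma opos_shift_obl: "(p @ q \<in> snd ` shift_obl p mo) \<longleftrightarrow> q \<in> snd ` mo"
proof -
  have "snd ` shift_obl p mo = (\<lambda>x. p @ snd x) ` mo" unfolding shift_obl_def by (simp add: image_image case_prod_beta)
  then show ?thesis by auto
qed

lemma abs_goals_deriv_subset:
  "abs_goals (deriv ar R L s f) p \<subseteq> deriv_abs ar R (abs_goals s p) f (p @ L s)"
proof
  fix G assume "G \<in> abs_goals (deriv ar R L s f) p"
  then obtain MO l Y mo a where G: "G = (MO,(l,Y))"
    and g: "(mo,(l,a)) \<in> deriv ar R L s f" "MO = shift_obl p mo" "Y = p @ a"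
    by (rule abs_goals_memE)
  from g(1) consider
      (reduced) mo0 where "(mo0,(l,a)) \<in> s" "\<exists>l' ts. (l', L s) \<in> mo0 \<and> l' = Fun f ts"
        "reduce ar mo0 f (L s) \<noteq> {}" "mo = reduce ar mo0 f (L s)"
    | (kept) "(mo,(l,a)) \<in> s" "L s \<notin> opos mo"
    | (new) i where "l \<in> lhss R" "1 \<le> i" "i \<le> ar f" "mo = {(l, L s @ [i])}" "a = L s @ [i]"
    unfolding deriv_def by blast
  then show "G \<in> deriv_abs ar R (abs_goals s p) f (p @ L s)"
  proof cases
    case reduced
    have "(shift_obl p mo0, (l, p @ a)) \<in> abs_goals s p" using reduced by (auto simp: abs_goals_mem)
    moreover have "\<exists>l' ts. (l', p @ L s) \<in> shift_obl p mo0 \<and> l' = Fun f ts"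
      using reduced(2) by (auto simp: shift_obl_mem)
    moreover have "MO \<noteq> {}" using g(2) reduced(3,4) by simp
    moreover have "MO = reduce ar (shift_obl p mo0) f (p @ L s)"
      using g(2) reduced(4) shift_obl_reduce by metis
    ultimately show ?thesis unfolding deriv_abs_def G g(3) by blast
  next
    case kept
    have "(shift_obl p mo, (l, p @ a)) \<in> abs_goals s p" using kept by (auto simp: abs_goals_mem)
    moreover have "p @ L s \<notin> snd ` shift_obl p mo"
      using kept(2) opos_shift_obl[of p "L s" mo] by (simp add: opos_def)
    ultimately show ?thesis unfolding deriv_abs_def G g(2,3) by blast
  next
    case new
    then show ?thesis unfolding deriv_abs_def G g(2,3) by auto
  qed
qed

lemma deriv_abs_subset_abs_goals:
  "deriv_abs ar R (abs_goals s p) f (p @ L s) \<subseteq> abs_goals (deriv ar R L s f) p"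
proof (intro subsetI)
  fix G assume "G \<in> deriv_abs ar R (abs_goals s p) f (p @ L s)"
  then consider
      (reduced) MO0 l Y where "G = (reduce ar MO0 f (p @ L s), (l,Y))" "(MO0,(l,Y)) \<in> abs_goals s p"
        "\<exists>l' ts. (l', p @ L s) \<in> MO0 \<and> l' = Fun f ts" "reduce ar MO0 f (p @ L s) \<noteq> {}"
    | (kept) MO l Y where "G = (MO,(l,Y))" "(MO,(l,Y)) \<in> abs_goals s p" "p @ L s \<notin> snd ` MO"
    | (new) l i where "G = ({(l, p @ L s @ [i])}, (l, p @ L s @ [i]))" "l \<in> lhss R" "1 \<le> i" "i \<le> ar f"
    unfolding deriv_abs_def by fastforce
  then show "G \<in> abs_goals (deriv ar R L s f) p"
  proof cases
    case reduced
    then obtain mo0 a where m: "(mo0,(l,a)) \<in> s" "MO0 = shift_obl p mo0" "Y = p @ a"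
      by (auto simp: abs_goals_mem)
    have "\<exists>l' ts. (l', L s) \<in> mo0 \<and> l' = Fun f ts" using reduced(3) m(2) by (auto simp: shift_obl_mem)
    moreover have "reduce ar mo0 f (L s) \<noteq> {}" using reduced(4) m(2) by (metis shift_obl_reduce shift_obl_empty)
    ultimately have "(reduce ar mo0 f (L s), (l,a)) \<in> deriv ar R L s f" using m(1) unfolding deriv_def by blast
    moreover have "reduce ar MO0 f (p @ L s) = shift_obl p (reduce ar mo0 f (L s))"
      using m(2) shift_obl_reduce by metis
    ultimately show ?thesis unfolding reduced(1) using m(3) by (auto simp: abs_goals_mem)
  next
    case kept
    then obtain mo a where m: "(mo,(l,a)) \<in> s" "MO = shift_obl p mo" "Y = p @ a" by (auto simp: abs_goals_mem)
    have "L s \<notin> opos mo" using kept(3) m(2) opos_shift_obl[of p "L s" mo] by (simp add: opos_def)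
    then have "(mo,(l,a)) \<in> deriv ar R L s f" using m(1) unfolding deriv_def by blast
    then show ?thesis unfolding kept(1) using m by (auto simp: abs_goals_mem)
  next
    case new
    then have "({(l, L s @ [i])}, (l, L s @ [i])) \<in> deriv ar R L s f" unfolding deriv_def by blast
    then show ?thesis unfolding new(1) by (force simp: abs_goals_mem)
  qed
qed

lemma abs_goals_deriv: "abs_goals (deriv ar R L s f) p = deriv_abs ar R (abs_goals s p) f (p @ L s)"
  using abs_goals_deriv_subset deriv_abs_subset_abs_goals by (rule equalityI)

section \<open>Invariants of reachable states\<close>

definition lhss_nonvar :: "('f,'v) rule set \<Rightarrow> bool" where
  "lhss_nonvar R \<longleftrightarrow> (\<forall>l\<in>lhss R. fun_sym l \<noteq> None)"

lemma dep_classesD: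
  assumes "K \<in> dep_classes D"
  shows "K \<subseteq> D" "K \<noteq> {}"
    "\<And>g g'. g \<in> K \<Longrightarrow> g' \<in> D \<Longrightarrow> opos (fst g) \<inter> opos (fst g') \<noteq> {} \<Longrightarrow> g' \<in> K"
proof -
  from assms obtain g0 where g0: "g0 \<in> D" "K = {g'. (g0,g') \<in> (dep_edge D)\<^sup>*}" unfolding dep_classes_def by blast
  show "K \<subseteq> D"
  proof
    fix g assume "g \<in> K"
    then have "(g0,g) \<in> (dep_edge D)\<^sup>*" using g0 by simp
    then show "g \<in> D" using g0(1) by (induction rule: rtrancl_induct) (auto simp: dep_edge_def)
  qed
  have "g0 \<in> K" using g0 by simp
  then show "K \<noteq> {}" by blast
  fix g g' assume "g \<in> K" "g' \<in> D" "opos (fst g) \<inter> opos (fst g') \<noteq> {}"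
  moreover have "g \<in> D" using \<open>g \<in> K\<close> \<open>K \<subseteq> D\<close> by blast
  ultimately have "(g, g') \<in> dep_edge D" unfolding dep_edge_def by blast
  with \<open>g \<in> K\<close> g0 show "g' \<in> K" by (auto intro: rtrancl_into_rtrancl)
qed

lemma dep_classes_cover: "g \<in> D \<Longrightarrow> \<exists>K\<in>dep_classes D. g \<in> K"
  unfolding dep_classes_def by blast

lemma finite_dep_classes: "finite D \<Longrightarrow> finite (dep_classes D)"
proof -
  assume "finite D"
  moreover have "dep_classes D \<subseteq> Pow D" using dep_classesD(1) by blast
  ultimately show ?thesis by (meson finite_Pow_iff finite_subset)
qed

lemma finite_lhss: "finite R \<Longrightarrow> finite (lhss R)"
  by (simp add: lhss_def)

lemma finite_deriv_abs:
  assumes "finite G" "finite R"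
  shows "finite (deriv_abs ar R G f x)"
proof -
  have "{(reduce ar MO f x, ma) | MO ma. (MO,ma) \<in> G \<and> (\<exists>l' ts. (l', x) \<in> MO \<and> l' = Fun f ts) \<and> reduce ar MO f x \<noteq> {}}
        \<subseteq> (\<lambda>(MO,ma). (reduce ar MO f x, ma)) ` G" by auto
  then have 1: "finite {(reduce ar MO f x, ma) | MO ma. (MO,ma) \<in> G \<and> (\<exists>l' ts. (l', x) \<in> MO \<and> l' = Fun f ts) \<and> reduce ar MO f x \<noteq> {}}"
    using assms(1) finite_subset by blast
  have 2: "finite {(MO,ma). (MO,ma) \<in> G \<and> x \<notin> snd ` MO}"
    using assms(1) by (rule finite_subset[rotated]) auto
  have "{({(l, x @ [i])}, (l, x @ [i])) | l i. l \<in> lhss R \<and> 1 \<le> i \<and> i \<le> ar f}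
        \<subseteq> (\<lambda>(l,i). ({(l, x @ [i])}, (l, x @ [i]))) ` (lhss R \<times> {..ar f})" by auto
  then have 3: "finite {({(l, x @ [i])}, (l, x @ [i])) | l i. l \<in> lhss R \<and> 1 \<le> i \<and> i \<le> ar f}"
    using finite_lhss[OF assms(2)] finite_subset by blast
  show ?thesis unfolding deriv_abs_def using 1 2 3 by blast
qed

lemma has_fresh_goalsD: "has_fresh_goals R s \<Longrightarrow> (mo,ma) \<in> s \<Longrightarrow> (l',z) \<in> mo \<Longrightarrow> l0 \<in> lhss R \<Longrightarrow> ({(l0,z)},(l0,z)) \<in> s"
  unfolding has_fresh_goals_def by blast

lemma deriv_abs_label_discharged: "(MO, ma) \<in> deriv_abs ar R G f x \<Longrightarrow> (l', x) \<notin> MO"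
proof
  assume a: "(MO, ma) \<in> deriv_abs ar R G f x" "(l', x) \<in> MO"
  from a(1) consider
      (r) MO0 where "MO = reduce ar MO0 f x"
    | (k) "x \<notin> snd ` MO"
    | (n) l i where "MO = {(l, x @ [i])}"
    unfolding deriv_abs_def by blast
  then show False
  proof cases
    case r then show ?thesis using a(2) unfolding reduce_def by auto
  next
    case k then show ?thesis using a(2) by force
  next
    case n then show ?thesis using a(2) by auto
  qed
qed

lemma wf_goals_deriv_abs:
  assumes wf: "wf_goals R G" and "lhss_nonvar R"
  shows "wf_goals R (deriv_abs ar R G f x)"
  unfolding wf_goals_def
proof (intro allI impI)
  fix MO l Y assume "(MO, (l, Y)) \<in> deriv_abs ar R G f x"
  then consider
      (reduced) MO0 where "(MO0,(l,Y)) \<in> G" "reduce ar MO0 f x \<noteq> {}" "MO = reduce ar MO0 f x"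
    | (kept) "(MO,(l,Y)) \<in> G"
    | (new) i where "l \<in> lhss R" "MO = {(l, x @ [i])}" "Y = x @ [i]"
    unfolding deriv_abs_def by blast
  then show "l \<in> lhss R \<and> MO \<noteq> {} \<and> (\<forall>l' z. (l', z) \<in> MO \<longrightarrow> (\<exists>w. z = Y @ w \<and> fun_pos l w \<and> subt l w = l'))"
  proof cases
    case reduced
    have wf0: "l \<in> lhss R" "\<And>l' z. (l', z) \<in> MO0 \<Longrightarrow> \<exists>w. z = Y @ w \<and> fun_pos l w \<and> subt l w = l'"
      using wf reduced(1) unfolding wf_goals_def by blast+
    have "\<exists>w. z = Y @ w \<and> fun_pos l w \<and> subt l w = l'" if "(l', z) \<in> MO" for l' z
    proof -
      from that reduced(3) consider "(l', z) \<in> MO0"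
        | l0 i where "(l0, x) \<in> MO0" "in_poss [i] l0" "\<forall>v. subt l0 [i] \<noteq> Var v" "l' = subt l0 [i]" "z = x @ [i]"
        unfolding reduce_def by blast
      then show ?thesis
      proof cases
        case 2
        from wf0(2)[OF 2(1)] obtain w where w: "x = Y @ w" "fun_pos l w" "subt l w = l0" by blast
        have "in_poss (w @ [i]) l" using w 2(2) by (auto simp: fun_pos_def in_poss_append)
        moreover have "subt l (w @ [i]) = l'" using w 2 by (simp add: subt_append)
        moreover have "fun_sym l' \<noteq> None" using 2(3,4) by (cases "subt l0 [i]") auto
        ultimately show ?thesis using w 2 by (intro exI[of _ "w @ [i]"]) (simp add: fun_pos_def)
      qed (use wf0 in blast)
    qed
    then show ?thesis using wf0(1) reduced(2,3) by blast
  next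
    case kept then show ?thesis using wf unfolding wf_goals_def by blast
  next
    case new
    have "fun_sym l \<noteq> None" using new(1) assms(2) unfolding lhss_nonvar_def by blast
    then show ?thesis using new by (simp add: fun_pos_def)
  qed
qed

lemma has_fresh_goals_deriv_abs:
  assumes fresh: "has_fresh_goals R G"
  shows "has_fresh_goals R (deriv_abs ar R G f x)"
  unfolding has_fresh_goals_def
proof (intro allI impI)
  fix MO ma l' z l0 assume a: "(MO, ma) \<in> deriv_abs ar R G f x" "(l', z) \<in> MO" "l0 \<in> lhss R"
  have "z \<noteq> x" using deriv_abs_label_discharged[OF a(1)] a(2) by blast
  from a(1) consider
      (reduced) MO0 ma0 where "(MO0,ma0) \<in> G" "MO = reduce ar MO0 f x"
    | (kept) "(MO,ma) \<in> G"
    | (new) l i where "1 \<le> i" "i \<le> ar f" "MO = {(l, x @ [i])}"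
    unfolding deriv_abs_def by blast
  then have "z \<in> obl_pos G \<or> (\<exists>i. 1 \<le> i \<and> i \<le> ar f \<and> z = x @ [i])"
  proof cases
    case reduced
    from a(2) reduced(2) have "(l',z) \<in> MO0 \<or> (\<exists>i. 1 \<le> i \<and> i \<le> ar f \<and> z = x @ [i])"
      unfolding reduce_def by blast
    then show ?thesis using reduced(1) unfolding obl_pos_def by blast
  next
    case kept
    then show ?thesis using a(2) unfolding obl_pos_def by blast
  next
    case new
    then show ?thesis using a(2) by auto
  qed
  then show "({(l0, z)}, l0, z) \<in> deriv_abs ar R G f x"
  proof
    assume "z \<in> obl_pos G"
    then have "({(l0, z)}, l0, z) \<in> G" using has_fresh_goalsD[OF fresh _ _ a(3)] unfolding obl_pos_def by blast
    with \<open>z \<noteq> x\<close> show ?thesis unfolding deriv_abs_def by (intro UnI1 UnI2) simp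
  next
    assume "\<exists>i. 1 \<le> i \<and> i \<le> ar f \<and> z = x @ [i]"
    then show ?thesis using a(3) unfolding deriv_abs_def by (intro UnI2) blast
  qed
qed

lemma state_inv_deriv_abs:
  assumes "state_inv R G" "finite R" "lhss_nonvar R"
  shows "state_inv R (deriv_abs ar R G f x)"
  using assms wf_goals_deriv_abs[of R G] has_fresh_goals_deriv_abs[of R G] finite_deriv_abs[of G R]
  unfolding state_inv_def by simp

lemma state_inv_deriv:
  assumes "state_inv R s" "finite R" "lhss_nonvar R"
  shows "state_inv R (deriv ar R L s f)"
  using state_inv_deriv_abs[OF assms, of ar f "L s"] abs_goals_deriv[of ar R L s f "[]"] state_inv_abs_goals[of R _ "[]"]
  by simp

lemma state_inv_class:
  assumes "state_inv R D" "K \<in> dep_classes D" "finite R"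
  shows "state_inv R K"
proof -
  have sub: "K \<subseteq> D" using dep_classesD(1)[OF assms(2)] .
  have "finite K" using assms(1) sub finite_subset unfolding state_inv_def by blast
  moreover have "wf_goals R K" using assms(1) sub unfolding state_inv_def wf_goals_def by blast
  moreover have "has_fresh_goals R K"
    unfolding has_fresh_goals_def
  proof (intro allI impI)
    fix mo ma l' z l0 assume a: "(mo, ma) \<in> K" "(l', z) \<in> mo" "l0 \<in> lhss R"
    have "({(l0,z)},(l0,z)) \<in> D" using assms(1) a sub unfolding state_inv_def has_fresh_goals_def by blast
    moreover have "opos (fst (mo,ma)) \<inter> opos (fst ({(l0,z)},(l0,z))) \<noteq> {}" using a(2)
      by (auto simp: opos_def image_iff) (metis snd_conv)
    ultimately show "({(l0,z)},(l0,z)) \<in> K" using dep_classesD(3)[OF assms(2) a(1)] by blast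
  qed
  ultimately show ?thesis by (simp add: state_inv_def)
qed

lemma delta_dep_class:
  assumes "state_inv R s" "finite R" "lhss_nonvar R" "(s', p') \<in> delta ar R L s f"
  shows "\<exists>K\<in>dep_classes (deriv ar R L s f). s' = lift K \<and> p' = gcp (ann_pos K) \<and> abs_goals s' p' = K \<and> state_inv R K \<and> state_inv R s'"
proof -
  obtain K where K: "K \<in> dep_classes (deriv ar R L s f)" "s' = lift K" "p' = gcp (ann_pos K)"
    using assms(4) unfolding delta_def by blast
  have SK: "state_inv R K" using state_inv_class[OF state_inv_deriv[OF assms(1-3)] K(1) assms(2)] .
  have "wf_goals R K" using SK by (simp add: state_inv_def)
  then have "abs_goals s' p' = K" using lift_abs_goals[OF dep_classesD(2)[OF K(1)]] K(2,3) by blast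
  moreover then have "state_inv R s'" using SK state_inv_abs_goals[of R s' p'] by simp
  ultimately show ?thesis using K SK by blast
qed

lemma s0_mem: "g \<in> s0 R \<longleftrightarrow> (\<exists>l. l \<in> lhss R \<and> g = ({(l,[])}, (l,[])))"
  unfolding s0_def by blast

lemma state_inv_s0:
  assumes "finite R" "lhss_nonvar R"
  shows "state_inv R (s0 R)"
proof -
  have "s0 R = (\<lambda>l. ({(l,[])}, (l,[]))) ` lhss R" unfolding s0_def by blast
  then have "finite (s0 R)" using finite_lhss[OF assms(1)] by simp
  moreover have "wf_goals R (s0 R)"
    unfolding wf_goals_def
  proof (intro allI impI)
    fix mo l a assume "(mo, l, a) \<in> s0 R"
    then have g: "l \<in> lhss R" "mo = {(l,[])}" "a = []" unfolding s0_mem by auto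
    have "fun_sym l \<noteq> None" using assms(2) g(1) unfolding lhss_nonvar_def by blast
    then have "fun_pos l []" by (simp add: fun_pos_def)
    then show "l \<in> lhss R \<and> mo \<noteq> {} \<and> (\<forall>l' z. (l', z) \<in> mo \<longrightarrow> (\<exists>w. z = a @ w \<and> fun_pos l w \<and> subt l w = l'))"
      using g by auto
  qed
  moreover have "has_fresh_goals R (s0 R)"
    unfolding has_fresh_goals_def
  proof (intro allI impI)
    fix mo ma l' z l0 assume a: "(mo, ma) \<in> s0 R" "(l', z) \<in> mo" "l0 \<in> lhss R"
    then obtain l where "mo = {(l,[])}" unfolding s0_mem by auto
    with a have "z = []" by simp
    then show "({(l0, z)}, l0, z) \<in> s0 R" using a(3) unfolding s0_mem by blast
  qed
  ultimately show ?thesis by (simp add: state_inv_def)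
qed

lemma reach_state_inv:
  assumes "s \<in> reach F ar R L" "finite R" "lhss_nonvar R"
  shows "state_inv R s"
  using assms(1)
proof induction
  case init then show ?case using state_inv_s0[OF assms(2,3)] .
next
  case (step s f s' p')
  from delta_dep_class[OF step.IH assms(2,3) step.hyps(3)] show ?case by blast
qed

lemma finite_delta: "state_inv R s \<Longrightarrow> finite R \<Longrightarrow> lhss_nonvar R \<Longrightarrow> finite (delta ar R L s f)"
  using state_inv_deriv[of R s ar L f] finite_dep_classes[of "deriv ar R L s f"]
  unfolding delta_def state_inv_def by (simp add: setcompr_eq_image)

definition overlap_closed :: "('f,'v) state \<Rightarrow> ('f,'v) state \<Rightarrow> bool" where
  "overlap_closed K D \<longleftrightarrow> (\<forall>g\<in>K. \<forall>g'\<in>D. opos (fst g) \<inter> opos (fst g') \<noteq> {} \<longrightarrow> g' \<in> K)"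

lemma abs_goals_mono: "K \<subseteq> D \<Longrightarrow> abs_goals K p \<subseteq> abs_goals D p"
  unfolding abs_goals_def by blast

lemma overlap_closed_abs_goals:
  assumes "overlap_closed K D"
  shows "overlap_closed (abs_goals K p) (abs_goals D p)"
  unfolding overlap_closed_def
proof (intro ballI impI)
  fix g g' assume g: "g \<in> abs_goals K p" and g': "g' \<in> abs_goals D p"
    and "opos (fst g) \<inter> opos (fst g') \<noteq> {}"
  then obtain l1 l2 z where z: "(l1,z) \<in> fst g" "(l2,z) \<in> fst g'" by (auto simp: opos_def)
  obtain g0 where g0: "g0 \<in> K" "g = shift_goal p g0" using g unfolding abs_goals_def by blast
  obtain g0' where g0': "g0' \<in> D" "g' = shift_goal p g0'" using g' unfolding abs_goals_def by blast
  from z g0(2) g0'(2) obtain z' where "(l1,z') \<in> fst g0" "(l2,z') \<in> fst g0'"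
    by (auto simp: shift_goal_def shift_obl_mem)
  then have "opos (fst g0) \<inter> opos (fst g0') \<noteq> {}" by (force simp: opos_def)
  with assms g0(1) g0'(1) have "g0' \<in> K" unfolding overlap_closed_def by blast
  then show "g' \<in> abs_goals K p" using g0' unfolding abs_goals_def by blast
qed

lemma delta_abs_goals:
  assumes "state_inv R s" "finite R" "lhss_nonvar R" "(s',p') \<in> delta ar R L s f"
  shows "abs_goals s' (p @ p') \<subseteq> deriv_abs ar R (abs_goals s p) f (p @ L s)"
    and "overlap_closed (abs_goals s' (p @ p')) (deriv_abs ar R (abs_goals s p) f (p @ L s))"
proof -
  obtain K where K: "K \<in> dep_classes (deriv ar R L s f)" "abs_goals s' p' = K"
    using delta_dep_class[OF assms] by blast
  have s': "abs_goals s' (p @ p') = abs_goals K p" using K(2) by (simp add: abs_goals_append)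
  show "abs_goals s' (p @ p') \<subseteq> deriv_abs ar R (abs_goals s p) f (p @ L s)"
    unfolding s' abs_goals_deriv[symmetric] using dep_classesD(1)[OF K(1)] by (rule abs_goals_mono)
  have "overlap_closed K (deriv ar R L s f)"
    using dep_classesD(3)[OF K(1)] unfolding overlap_closed_def by blast
  from overlap_closed_abs_goals[OF this, of p]
  show "overlap_closed (abs_goals s' (p @ p')) (deriv_abs ar R (abs_goals s p) f (p @ L s))"
    unfolding s' abs_goals_deriv .
qed

lemma deriv_abs_in_delta:
  assumes "state_inv R s" "finite R" "lhss_nonvar R" "g \<in> deriv_abs ar R (abs_goals s p) f (p @ L s)"
  shows "\<exists>(s',p')\<in>delta ar R L s f. g \<in> abs_goals s' (p @ p')"
proof -
  have "g \<in> abs_goals (deriv ar R L s f) p" using assms(4) abs_goals_deriv by metis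
  then obtain g0 where g0: "g0 \<in> deriv ar R L s f" "g = shift_goal p g0" unfolding abs_goals_def by blast
  obtain K where K: "K \<in> dep_classes (deriv ar R L s f)" "g0 \<in> K" using dep_classes_cover[OF g0(1)] by blast
  have d: "(lift K, gcp (ann_pos K)) \<in> delta ar R L s f" using K(1) unfolding delta_def by blast
  have "state_inv R K" using state_inv_class[OF state_inv_deriv[OF assms(1-3)] K(1) assms(2)] .
  then have "abs_goals (lift K) (gcp (ann_pos K)) = K"
    using lift_abs_goals[OF dep_classesD(2)[OF K(1)], of R] by (simp add: state_inv_def)
  then have "abs_goals (lift K) (p @ gcp (ann_pos K)) = abs_goals K p" by (simp add: abs_goals_append)
  then have "g \<in> abs_goals (lift K) (p @ gcp (ann_pos K))" using K(2) g0(2) unfolding abs_goals_def by auto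
  then show ?thesis using d by blast
qed

lemma obl_posI: "(MO,ma) \<in> G \<Longrightarrow> (l',z) \<in> MO \<Longrightarrow> z \<in> obl_pos G"
  unfolding obl_pos_def by blast

lemma obl_pos_mono: "G \<subseteq> G' \<Longrightarrow> obl_pos G \<subseteq> obl_pos G'"
  unfolding obl_pos_def by blast

lemma obl_pos_deriv_abs:
  assumes "z \<in> obl_pos (deriv_abs ar R G f x)"
  shows "(z \<in> obl_pos G \<and> z \<noteq> x) \<or> (\<exists>i. 1 \<le> i \<and> i \<le> ar f \<and> z = x @ [i])"
proof -
  obtain MO ma l' where a: "(MO,ma) \<in> deriv_abs ar R G f x" "(l',z) \<in> MO"
    using assms unfolding obl_pos_def by blast
  have "z \<noteq> x" using deriv_abs_label_discharged[OF a(1)] a(2) by blast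
  from a(1) consider
      (reduced) MO0 ma0 where "(MO0,ma0) \<in> G" "MO = reduce ar MO0 f x"
    | (kept) "(MO,ma) \<in> G"
    | (new) l i where "1 \<le> i" "i \<le> ar f" "MO = {(l, x @ [i])}"
    unfolding deriv_abs_def by blast
  then show ?thesis
  proof cases
    case reduced
    from a(2) reduced(2) have "(l',z) \<in> MO0 \<or> (\<exists>i. 1 \<le> i \<and> i \<le> ar f \<and> z = x @ [i])"
      unfolding reduce_def by blast
    then show ?thesis using reduced(1) \<open>z \<noteq> x\<close> by (blast intro: obl_posI)
  next
    case kept
    then show ?thesis using a(2) \<open>z \<noteq> x\<close> by (blast intro: obl_posI)
  next
    case new
    then show ?thesis using a(2) by blast
  qed
qed

lemma deriv_abs_keeps_obligation:
  assumes g: "(MO,(l,y)) \<in> G" and z: "(l',z) \<in> MO" "z \<noteq> x"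
    and head: "\<And>lx. (lx,x) \<in> MO \<Longrightarrow> \<exists>ts. lx = Fun f ts"
  shows "\<exists>MO'. (MO',(l,y)) \<in> deriv_abs ar R G f x \<and> (l',z) \<in> MO'"
proof (cases "x \<in> snd ` MO")
  case False
  then show ?thesis using g z unfolding deriv_abs_def by blast
next
  case True
  then obtain lx where lx: "(lx,x) \<in> MO" by force
  have "(l',z) \<in> reduce ar MO f x" using z unfolding reduce_def by blast
  moreover then have "(reduce ar MO f x, (l,y)) \<in> deriv_abs ar R G f x"
    using g lx head[OF lx] unfolding deriv_abs_def by blast
  ultimately show ?thesis by blast
qed

lemma deriv_abs_child_obligation:
  assumes g: "(MO,(l,y)) \<in> G" and lx: "(Fun f ts, x) \<in> MO"
    and i: "1 \<le> i" "i \<le> ar f" "in_poss [i] (Fun f ts)" "fun_sym (subt (Fun f ts) [i]) \<noteq> None"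
  shows "\<exists>MO'. (MO',(l,y)) \<in> deriv_abs ar R G f x \<and> (subt (Fun f ts) [i], x @ [i]) \<in> MO'"
proof -
  have "\<forall>v. subt (Fun f ts) [i] \<noteq> Var v" using i(4) by auto
  then have "(subt (Fun f ts) [i], x @ [i]) \<in> reduce ar MO f x"
    using lx i unfolding reduce_def by blast
  moreover then have "(reduce ar MO f x, (l,y)) \<in> deriv_abs ar R G f x"
    using g lx unfolding deriv_abs_def by blast
  ultimately show ?thesis by blast
qed

lemma wf_goalsD:
  assumes "wf_goals R G" "(MO,(l,Y)) \<in> G" "(l',z) \<in> MO"
  obtains w where "l \<in> lhss R" "z = Y @ w" "fun_pos l w" "subt l w = l'"
  using assms unfolding wf_goals_def by blast

section \<open>Invariants of configurations\<close>

text \<open>A history \<open>h\<close> is the set of positions read by the ancestors of a configuration.\<close>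

definition valid_history :: "('f,'v) term \<Rightarrow> pos set \<Rightarrow> bool" where
  "valid_history t h \<longleftrightarrow> (\<forall>y\<in>h. in_poss y t \<and> (y \<noteq> [] \<longrightarrow> butlast y \<in> h))"

definition obls_at_frontier :: "('f,'v) term \<Rightarrow> pos set \<Rightarrow> ('f,'v) state \<Rightarrow> bool" where
  "obls_at_frontier t h G \<longleftrightarrow> (\<forall>z\<in>obl_pos G. z \<notin> h \<and> in_poss z t \<and> (z \<noteq> [] \<longrightarrow> butlast z \<in> h))"

definition goals_consistent :: "('f,'v) term \<Rightarrow> pos set \<Rightarrow> ('f,'v) state \<Rightarrow> bool" where
  "goals_consistent t h G \<longleftrightarrow> (\<forall>MO l Y w. (MO,(l,Y)) \<in> G \<longrightarrow> fun_pos l w \<longrightarrow>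
     (\<exists>l' z. (l',z) \<in> MO \<and> prefix z (Y @ w)) \<or>
     (Y @ w \<in> h \<and> fun_sym (subt t (Y @ w)) = fun_sym (subt l w)))"

definition goals_complete :: "('f,'v) rule set \<Rightarrow> ('f,'v) term \<Rightarrow> pos set \<Rightarrow> ('f,'v) state \<Rightarrow> bool" where
  "goals_complete R t h G \<longleftrightarrow> (\<forall>z\<in>obl_pos G. \<forall>l\<in>lhss R. \<forall>y w.
     z = y @ w \<longrightarrow> w \<noteq> [] \<longrightarrow> fun_pos l w \<longrightarrow>
     (\<forall>w'. fun_pos l w' \<longrightarrow> y @ w' \<in> h \<longrightarrow> fun_sym (subt t (y @ w')) = fun_sym (subt l w')) \<longrightarrow>
     (\<exists>MO l'. (MO,(l,y)) \<in> G \<and> (l',z) \<in> MO))"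

definition pending :: "('f,'v) state \<Rightarrow> ('f,'v) term \<Rightarrow> pos \<Rightarrow> bool" where
  "pending G l y \<longleftrightarrow> (\<exists>MO. (MO,(l,y)) \<in> G) \<or> (\<exists>z\<in>obl_pos G. strict_prefix z y)"

lemma obls_at_frontier_mono: "K \<subseteq> G \<Longrightarrow> obls_at_frontier t h G \<Longrightarrow> obls_at_frontier t h K"
  unfolding obls_at_frontier_def using obl_pos_mono by blast

lemma goals_consistent_mono: "K \<subseteq> G \<Longrightarrow> goals_consistent t h G \<Longrightarrow> goals_consistent t h K"
  unfolding goals_consistent_def by blast

lemma goals_consistentD:
  assumes "goals_consistent t h G" "(MO,(l,Y)) \<in> G" "fun_pos l w"
  shows "(\<exists>l' z. (l',z) \<in> MO \<and> prefix z (Y @ w)) \<or>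
    (Y @ w \<in> h \<and> fun_sym (subt t (Y @ w)) = fun_sym (subt l w))"
  using assms unfolding goals_consistent_def by blast

lemma goals_completeD:
  assumes "goals_complete R t h G" "z \<in> obl_pos G" "l \<in> lhss R" "z = y @ w" "w \<noteq> []" "fun_pos l w"
    "\<And>w'. fun_pos l w' \<Longrightarrow> y @ w' \<in> h \<Longrightarrow> fun_sym (subt t (y @ w')) = fun_sym (subt l w')"
  obtains MO l' where "(MO,(l,y)) \<in> G" "(l',z) \<in> MO"
proof -
  have "\<forall>w'. fun_pos l w' \<longrightarrow> y @ w' \<in> h \<longrightarrow> fun_sym (subt t (y @ w')) = fun_sym (subt l w')"
    using assms(7) by blast
  with assms(1-6) show ?thesis using that unfolding goals_complete_def by blast
qed

lemma goals_complete_overlap_closed: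
  assumes compl: "goals_complete R t h D" and "K \<subseteq> D" and closed: "overlap_closed K D"
  shows "goals_complete R t h K"
  unfolding goals_complete_def
proof (intro ballI allI impI)
  fix z l y w assume z: "z \<in> obl_pos K" and l: "l \<in> lhss R" and zw: "z = y @ w" "w \<noteq> []" "fun_pos l w"
    and agree: "\<forall>w'. fun_pos l w' \<longrightarrow> y @ w' \<in> h \<longrightarrow> fun_sym (subt t (y @ w')) = fun_sym (subt l w')"
  have "z \<in> obl_pos D" using z obl_pos_mono[OF \<open>K \<subseteq> D\<close>] by blast
  then obtain MO l' where g: "(MO,(l,y)) \<in> D" "(l',z) \<in> MO"
    using goals_completeD[OF compl _ l zw] agree by blast
  obtain MOz maz lz where "(MOz,maz) \<in> K" "(lz,z) \<in> MOz" using z unfolding obl_pos_def by blast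
  with g closed have "(MO,(l,y)) \<in> K" unfolding overlap_closed_def opos_def by force
  with g(2) show "\<exists>MO l'. (MO,(l,y)) \<in> K \<and> (l',z) \<in> MO" by blast
qed

lemma pending_below_obligation:
  assumes "has_fresh_goals R G" "l \<in> lhss R" "q \<in> obl_pos G" "prefix q y"
  shows "pending G l y"
proof -
  have "({(l,q)},(l,q)) \<in> G" using assms(1-3) has_fresh_goalsD unfolding obl_pos_def by blast
  then show ?thesis using assms(3,4) unfolding pending_def strict_prefix_def by blast
qed

lemma pending_mono: "G \<subseteq> G' \<Longrightarrow> pending G l y \<Longrightarrow> pending G' l y"
  unfolding pending_def using obl_pos_mono by blast

lemma pending_deriv_abs:
  assumes x: "x \<in> obl_pos G" and pend: "pending (deriv_abs ar R G f x) l y"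
  shows "pending G l y"
proof -
  have below_x: "pending G l y" if "strict_prefix x y"
    using x that unfolding pending_def by blast
  from pend consider (announced) MO where "(MO,(l,y)) \<in> deriv_abs ar R G f x"
    | (below) z where "z \<in> obl_pos (deriv_abs ar R G f x)" "strict_prefix z y"
    unfolding pending_def by blast
  then show ?thesis
  proof cases
    case announced
    then have "(\<exists>MO'. (MO',(l,y)) \<in> G) \<or> (\<exists>i. y = x @ [i])" unfolding deriv_abs_def by blast
    then show ?thesis using below_x unfolding pending_def by (auto simp: strict_prefix_def)
  next
    case below
    from obl_pos_deriv_abs[OF below(1)] show ?thesis
    proof (elim disjE exE conjE)
      fix i assume "z = x @ [i]"
      then have "strict_prefix x y" using below(2) prefix_order.le_less_trans
        by (metis prefix_order.less_imp_le strict_prefixI' )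
      then show ?thesis by (rule below_x)
    qed (use below(2) in \<open>auto simp: pending_def\<close>)
  qed
qed

section \<open>Growing a configuration\<close>

lemma obls_at_frontier_deriv_abs:
  assumes hist: "valid_history t h" and front: "obls_at_frontier t h G" and x: "x \<in> obl_pos G"
    and wft: "wf_term F ar t" and fx: "fun_sym (subt t x) = Some f"
  shows "obls_at_frontier t (insert x h) (deriv_abs ar R G f x)"
  unfolding obls_at_frontier_def
proof
  fix z assume "z \<in> obl_pos (deriv_abs ar R G f x)"
  from obl_pos_deriv_abs[OF this] show "z \<notin> insert x h \<and> in_poss z t \<and> (z \<noteq> [] \<longrightarrow> butlast z \<in> insert x h)"
  proof
    assume "z \<in> obl_pos G \<and> z \<noteq> x"
    then show ?thesis using front unfolding obls_at_frontier_def by auto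
  next
    assume "\<exists>i. 1 \<le> i \<and> i \<le> ar f \<and> z = x @ [i]"
    then obtain i where i: "1 \<le> i" "i \<le> ar f" "z = x @ [i]" by blast
    have xt: "x \<notin> h" "in_poss x t" using front x unfolding obls_at_frontier_def by auto
    have "z \<notin> h" using hist xt(1) i(3) unfolding valid_history_def by force
    moreover have "in_poss z t" using in_poss_child[OF wft xt(2) fx] i by simp
    ultimately show ?thesis using i(3) by simp
  qed
qed

lemma reduce_obligation_below:
  assumes wf: "wf_goals R G" and wfl: "\<forall>l\<in>lhss R. wf_term F ar l"
    and g: "(MO,(l,Y)) \<in> G" and x: "(Fun f ts, x) \<in> MO"
    and w: "fun_pos l w" "prefix x (Y @ w)"
  shows "(Y @ w = x \<and> subt l w = Fun f ts) \<or> (\<exists>l' z. (l',z) \<in> reduce ar MO f x \<and> prefix z (Y @ w))"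
proof -
  obtain wx where wx: "l \<in> lhss R" "x = Y @ wx" "fun_pos l wx" "subt l wx = Fun f ts"
    using wf_goalsD[OF wf g x] .
  obtain rr where rr: "w = wx @ rr" using w(2) wx(2) by (auto simp: prefix_def)
  show ?thesis
  proof (cases rr)
    case Nil
    then show ?thesis using wx rr by simp
  next
    case (Cons i rr')
    have "fun_pos l (wx @ [i])" using fun_pos_prefix[OF w(1)] rr Cons by simp
    then have ci: "in_poss [i] (Fun f ts)" "fun_sym (subt (Fun f ts) [i]) \<noteq> None"
      using wx by (auto simp: fun_pos_def in_poss_append subt_append)
    have "wf_term F ar (Fun f ts)" using wf_subt[OF wfl[rule_format, OF wx(1)]] wx by (metis fun_pos_def)
    then have "1 \<le> i" "i \<le> ar f" using ci(1) by auto
    moreover have "\<forall>v. subt (Fun f ts) [i] \<noteq> Var v" using ci(2) by auto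
    ultimately have "(subt (Fun f ts) [i], x @ [i]) \<in> reduce ar MO f x"
      using x ci(1) unfolding reduce_def by blast
    moreover have "prefix (x @ [i]) (Y @ w)" using rr wx(2) Cons by simp
    ultimately show ?thesis by blast
  qed
qed

lemma goals_consistent_deriv_abs:
  assumes wf: "wf_goals R G" and wfl: "\<forall>l\<in>lhss R. wf_term F ar l"
    and cons: "goals_consistent t h G" and fx: "fun_sym (subt t x) = Some f"
  shows "goals_consistent t (insert x h) (deriv_abs ar R G f x)"
  unfolding goals_consistent_def
proof (intro allI impI)
  fix MO l Y w assume g: "(MO,(l,Y)) \<in> deriv_abs ar R G f x" and w: "fun_pos l w"
  from g consider
      (reduced) MO0 ts where "(MO0,(l,Y)) \<in> G" "(Fun f ts, x) \<in> MO0" "MO = reduce ar MO0 f x"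
    | (kept) "(MO,(l,Y)) \<in> G"
    | (new) i where "MO = {(l, x @ [i])}" "Y = x @ [i]"
    unfolding deriv_abs_def by blast
  then show "(\<exists>l' z. (l',z) \<in> MO \<and> prefix z (Y @ w)) \<or>
      (Y @ w \<in> insert x h \<and> fun_sym (subt t (Y @ w)) = fun_sym (subt l w))"
  proof cases
    case reduced
    from goals_consistentD[OF cons reduced(1) w] show ?thesis
    proof (elim disjE exE conjE)
      fix l' z assume lz: "(l',z) \<in> MO0" "prefix z (Y @ w)"
      show ?thesis
      proof (cases "z = x")
        case False
        then have "(l',z) \<in> MO" using lz(1) reduced(3) unfolding reduce_def by blast
        then show ?thesis using lz(2) by blast
      next
        case True
        with reduce_obligation_below[OF wf wfl reduced(1,2) w] lz(2) reduced(3) fx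
        show ?thesis by auto
      qed
    qed blast
  next
    case kept
    then show ?thesis using goals_consistentD[OF cons _ w] by blast
  next
    case new
    then show ?thesis by auto
  qed
qed

lemma goals_complete_label:
  assumes wf: "wf_goals R G" and fresh: "has_fresh_goals R G" and x: "x \<in> obl_pos G"
    and compl: "goals_complete R t h G" and l: "l \<in> lhss R"
    and w: "x = y @ w" "fun_pos l w"
    and agree: "\<And>w'. fun_pos l w' \<Longrightarrow> y @ w' \<in> h \<Longrightarrow> fun_sym (subt t (y @ w')) = fun_sym (subt l w')"
  shows "\<exists>MO. (MO,(l,y)) \<in> G \<and> (subt l w, x) \<in> MO"
proof (cases "w = []")
  case True
  \<comment> \<open>l is announced at x itself by the fresh goal at x\<close>
  obtain MOx max lx where "(MOx,max) \<in> G" "(lx,x) \<in> MOx" using x unfolding obl_pos_def by blast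
  then have "({(l,x)},(l,x)) \<in> G" using has_fresh_goalsD[OF fresh _ _ l] by blast
  then show ?thesis using True w by auto
next
  case False
  obtain MO lx where g: "(MO,(l,y)) \<in> G" "(lx,x) \<in> MO"
    using goals_completeD[OF compl x l w(1) False w(2) agree] .
  then have "lx = subt l w" using wf_goalsD[OF wf g] w by (metis same_append_eq)
  then show ?thesis using g by blast
qed

lemma goals_complete_deriv_abs:
  assumes wf: "wf_goals R G" and fresh: "has_fresh_goals R G" and x: "x \<in> obl_pos G"
    and fx: "fun_sym (subt t x) = Some f" and compl: "goals_complete R t h G"
  shows "goals_complete R t (insert x h) (deriv_abs ar R G f x)"
  unfolding goals_complete_def
proof (intro ballI allI impI)
  fix z l y w
  assume z: "z \<in> obl_pos (deriv_abs ar R G f x)" and l: "l \<in> lhss R"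
    and zw: "z = y @ w" "w \<noteq> []" "fun_pos l w"
    and agree: "\<forall>w'. fun_pos l w' \<longrightarrow> y @ w' \<in> insert x h \<longrightarrow> fun_sym (subt t (y @ w')) = fun_sym (subt l w')"
  have agree_h: "fun_sym (subt t (y @ w')) = fun_sym (subt l w')" if "fun_pos l w'" "y @ w' \<in> h" for w'
    using agree that by blast
  have agree_x: "fun_sym (subt l w') = Some f" if "fun_pos l w'" "x = y @ w'" for w'
    using agree that fx by auto
  from obl_pos_deriv_abs[OF z] show "\<exists>MO l'. (MO,(l,y)) \<in> deriv_abs ar R G f x \<and> (l',z) \<in> MO"
  proof
    assume zG: "z \<in> obl_pos G \<and> z \<noteq> x"
    obtain MO l' where g: "(MO,(l,y)) \<in> G" "(l',z) \<in> MO"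
      using goals_completeD[OF compl _ l zw agree_h] zG by blast
    have "\<exists>ts. lx = Fun f ts" if lx: "(lx,x) \<in> MO" for lx
    proof -
      obtain wx where "x = y @ wx" "fun_pos l wx" "subt l wx = lx" using wf_goalsD[OF wf g(1) lx] by blast
      then have "fun_sym lx = Some f" using agree_x by blast
      then show ?thesis by (cases lx) auto
    qed
    with deriv_abs_keeps_obligation[OF g] zG show ?thesis by blast
  next
    assume "\<exists>i. 1 \<le> i \<and> i \<le> ar f \<and> z = x @ [i]"
    then obtain i where i: "1 \<le> i" "i \<le> ar f" "z = x @ [i]" by blast
    obtain w0 where w: "w = w0 @ [i]" and yx: "x = y @ w0"
      using zw(1,2) i(3) by (cases w rule: rev_cases) auto
    have "fun_pos l w0" using fun_pos_prefix[OF zw(3)] w by simp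
    then have "fun_sym (subt l w0) = Some f" using agree_x yx by blast
    then obtain ts where lw0: "subt l w0 = Fun f ts" by (cases "subt l w0") auto
    have ci: "in_poss [i] (Fun f ts)" "fun_sym (subt (Fun f ts) [i]) \<noteq> None"
      using zw(3) w lw0 by (simp_all add: fun_pos_def in_poss_append subt_append)
    obtain MO where "(MO,(l,y)) \<in> G" "(Fun f ts, x) \<in> MO"
      using goals_complete_label[OF wf fresh x compl l yx \<open>fun_pos l w0\<close> agree_h] lw0 by auto
    from deriv_abs_child_obligation[where ar=ar and R=R, OF this i(1,2) ci] show ?thesis using i(3) by blast
  qed
qed

lemma pending_below_deriv_abs:
  assumes fresh: "has_fresh_goals R G" and l: "l \<in> lhss R"
    and z: "z \<in> obl_pos G" "strict_prefix z y"
    and wft: "wf_term F ar t" and y: "in_poss y t" and fx: "fun_sym (subt t x) = Some f"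
  shows "pending (deriv_abs ar R G f x) l y"
proof -
  obtain MOz maz lz where "(MOz,maz) \<in> G" "(lz,z) \<in> MOz" using z(1) unfolding obl_pos_def by blast
  then have fz: "({(l,z)},(l,z)) \<in> G" using has_fresh_goalsD[OF fresh _ _ l] by blast
  show ?thesis
  proof (cases "z = x")
    case False
    then have "({(l,z)},(l,z)) \<in> deriv_abs ar R G f x" using fz unfolding deriv_abs_def by auto
    then show ?thesis using z(2) unfolding pending_def by (blast intro: obl_posI)
  next
    case True
    from z(2) True obtain zs where "y = x @ zs" "zs \<noteq> []" by (auto simp: strict_prefix_def prefix_def)
    then obtain i rest where yi: "y = x @ i # rest" by (cases zs) auto
    have "in_poss x t" "in_poss (x @ [i]) t" using in_poss_prefix[OF y] yi by (auto simp: prefix_def)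
    then have "1 \<le> i" "i \<le> ar f" using in_poss_child[OF wft _ fx] by blast+
    then have new: "({(l, x @ [i])},(l, x @ [i])) \<in> deriv_abs ar R G f x"
      using l unfolding deriv_abs_def by blast
    show ?thesis
    proof (cases rest)
      case Nil
      then show ?thesis using new yi unfolding pending_def by blast
    next
      case Cons
      then have "strict_prefix (x @ [i]) y" using yi by (simp add: strict_prefix_def)
      then show ?thesis using new unfolding pending_def by (blast intro: obl_posI)
    qed
  qed
qed

lemma reduce_empty_obligation:
  assumes wf: "wf_goals R G" and wfl: "\<forall>l\<in>lhss R. wf_term F ar l"
    and g: "(MO,(l,y)) \<in> G" and x: "(Fun f ts, x) \<in> MO" and empty: "reduce ar MO f x = {}"
  shows "MO = {(Fun f ts, x)} \<and> length ts = ar f \<and> (\<forall>u\<in>set ts. \<exists>v. u = Var v)"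
proof -
  obtain wx where wx: "l \<in> lhss R" "x = y @ wx" "fun_pos l wx" "subt l wx = Fun f ts"
    using wf_goalsD[OF wf g x] .
  have "(l',z) = (Fun f ts, x)" if lz: "(l',z) \<in> MO" for l' z
  proof -
    have "z = x"
    proof (rule ccontr)
      assume "z \<noteq> x"
      then have "(l',z) \<in> reduce ar MO f x" using lz unfolding reduce_def by blast
      with empty show False by blast
    qed
    moreover obtain w' where "z = y @ w'" "subt l w' = l'" using wf_goalsD[OF wf g lz] by blast
    ultimately show ?thesis using wx by simp
  qed
  then have "MO = {(Fun f ts, x)}" using x by fast
  moreover have len: "length ts = ar f"
    using wf_subt[OF wfl[rule_format, OF wx(1)], of wx] wx by (simp add: fun_pos_def)
  moreover have "\<exists>v. u = Var v" if "u \<in> set ts" for u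
  proof (rule ccontr)
    assume nv: "\<nexists>v. u = Var v"
    obtain j where j: "j < length ts" "u = ts ! j" using \<open>u \<in> set ts\<close> by (metis in_set_conv_nth)
    have "in_poss [Suc j] (Fun f ts)" "subt (Fun f ts) [Suc j] = u" "1 \<le> Suc j" "Suc j \<le> ar f"
      using j len by auto
    then have "(subt (Fun f ts) [Suc j], x @ [Suc j]) \<in> reduce ar MO f x"
      using x nv unfolding reduce_def by blast
    with empty show False by blast
  qed
  ultimately show ?thesis by blast
qed

lemma pending_announced_deriv_abs:
  assumes wf: "wf_goals R G" and wfl: "\<forall>l\<in>lhss R. wf_term F ar l"
    and g: "(MO,(l,y)) \<in> G" and sk: "skeleton_matches l t y" and fx: "fun_sym (subt t x) = Some f"
  shows "pending (deriv_abs ar R G f x) l y \<or>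
    (\<exists>xs. MO = {(Fun f xs, x)} \<and> length xs = ar f \<and> (\<forall>u\<in>set xs. \<exists>v. u = Var v))"
proof (cases "x \<in> snd ` MO")
  case False
  then have "(MO,(l,y)) \<in> deriv_abs ar R G f x" using g unfolding deriv_abs_def by blast
  then show ?thesis unfolding pending_def by blast
next
  case True
  then obtain lx where lx: "(lx,x) \<in> MO" by force
  obtain wx where wx: "l \<in> lhss R" "x = y @ wx" "fun_pos l wx" "subt l wx = lx"
    using wf_goalsD[OF wf g lx] .
  have "fun_sym (subt t (y @ wx)) = fun_sym (subt l wx)"
    using sk wx(3) unfolding skeleton_matches_def by blast
  then have "fun_sym lx = Some f" using fx wx(2,4) by simp
  then obtain ts where lxf: "lx = Fun f ts" by (cases lx) auto
  show ?thesis
  proof (cases "reduce ar MO f x = {}")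
    case False
    then have "(reduce ar MO f x, (l,y)) \<in> deriv_abs ar R G f x"
      using g lx lxf unfolding deriv_abs_def by blast
    then show ?thesis unfolding pending_def by blast
  next
    \<comment> \<open>nothing is left to check: the whole of l has been matched\<close>
    case True
    then show ?thesis using reduce_empty_obligation[OF wf wfl g lx[unfolded lxf]] by blast
  qed
qed

lemma singleton_goal_matches:
  assumes g: "({(Fun f xs, p @ L s)}, (l,y)) \<in> abs_goals s p"
    and xs: "length xs = ar f" "\<forall>u\<in>set xs. \<exists>v. u = Var v"
    and "(l,r) \<in> R" and f: "f = hd_sym (subt t (p @ L s))"
  shows "((l,r),y) \<in> matches ar R L s p t"
proof -
  obtain mo a where m: "(mo,(l,a)) \<in> s" "{(Fun f xs, p @ L s)} = shift_obl p mo" "y = p @ a"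
    using g unfolding abs_goals_mem by blast
  have "shift_obl p mo = shift_obl p {(Fun f xs, L s)}" using m(2) by simp
  then have "mo = {(Fun f xs, L s)}" by (rule shift_obl_inj)
  then have "((l,r),a) \<in> out ar R L s f" unfolding out_def using assms(4) xs m(1) by blast
  then show ?thesis unfolding matches_def f using m(3) by blast
qed

definition covers :: "('f,'v) state \<times> pos \<Rightarrow> ('f,'v) state \<times> pos \<Rightarrow> bool" where
  "covers c c' \<longleftrightarrow>
     (\<forall>l y. pending (abs_goals (fst c') (snd c')) l y \<longrightarrow> pending (abs_goals (fst c) (snd c)) l y)"

lemma covers_refl: "covers c c"
  unfolding covers_def by blast

lemma covers_trans: "covers c1 c2 \<Longrightarrow> covers c2 c3 \<Longrightarrow> covers c1 c3"
  unfolding covers_def by blast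

section \<open>The set automaton of a left-linear TRS\<close>

locale set_automaton =
  fixes F :: "'f set" and ar :: "'f \<Rightarrow> nat" and R :: "('f,'v) rule set"
    and L :: "('f,'v) state \<Rightarrow> pos"
  assumes trs: "trs F ar R" and left_linear: "left_linear R"
    and valid_label: "valid_label F ar R L"
begin

lemma finite_rules: "finite R"
  using trs by (simp add: trs_def)

lemma lhss_nonvar: "lhss_nonvar R"
  unfolding lhss_nonvar_def
proof
  fix l assume "l \<in> lhss R"
  then obtain r where "(l,r) \<in> R" by (auto simp: lhss_def)
  then have "\<forall>x. l \<noteq> Var x" using trs by (auto simp: trs_def)
  then show "fun_sym l \<noteq> None" by (cases l) auto
qed

lemma wf_lhss: "\<forall>l\<in>lhss R. wf_term F ar l"
  using trs by (auto simp: trs_def lhss_def)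

lemma rule_wf_linear: "(l,r) \<in> R \<Longrightarrow> wf_term F ar l \<and> wf_term F ar r \<and> vars r \<subseteq> vars l \<and> linear l"
  using trs left_linear by (auto simp: trs_def left_linear_def)

lemma reachable_state_inv: "s \<in> reach F ar R L \<Longrightarrow> state_inv R s"
  using reach_state_inv finite_rules lhss_nonvar by blast

lemma state_inv_abs_goals_reach: "s \<in> reach F ar R L \<Longrightarrow> state_inv R (abs_goals s p)"
  using reachable_state_inv state_inv_abs_goals by blast

lemma label_obl_pos: "s \<in> reach F ar R L \<Longrightarrow> p @ L s \<in> obl_pos (abs_goals s p)"
proof -
  assume "s \<in> reach F ar R L"
  then obtain mo l where g: "(mo,(l,[])) \<in> s" "L s \<in> opos mo"
    using valid_label unfolding valid_label_def by blast
  from g(2) obtain l' where "(l', L s) \<in> mo" by (auto simp: opos_def)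
  with g(1) have "(shift_obl p mo, (l, p @ [])) \<in> abs_goals s p" "(l', p @ L s) \<in> shift_obl p mo"
    by (auto simp: abs_goals_mem shift_obl_mem)
  then show ?thesis by (rule obl_posI)
qed

definition config_inv :: "('f,'v) term \<Rightarrow> ('f,'v) state \<Rightarrow> pos \<Rightarrow> pos set \<Rightarrow> bool" where
  "config_inv t s p h \<longleftrightarrow> s \<in> reach F ar R L \<and> valid_history t h \<and>
     obls_at_frontier t h (abs_goals s p) \<and> goals_consistent t h (abs_goals s p) \<and>
     goals_complete R t h (abs_goals s p)"

lemma config_inv_label:
  assumes "config_inv t s p h" "ground t"
  shows "in_poss (p @ L s) t" "fun_sym (subt t (p @ L s)) = Some (hd_sym (subt t (p @ L s)))"
proof -
  have "p @ L s \<in> obl_pos (abs_goals s p)" using assms(1) label_obl_pos unfolding config_inv_def by blast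
  then show in_poss: "in_poss (p @ L s) t"
    using assms(1) unfolding config_inv_def obls_at_frontier_def by blast
  show "fun_sym (subt t (p @ L s)) = Some (hd_sym (subt t (p @ L s)))"
    using ground_fun_sym[OF assms(2) in_poss] by (cases "subt t (p @ L s)") auto
qed

lemma config_inv_child:
  assumes inv: "config_inv t s p h" and wft: "wf_term F ar t" and gr: "ground t"
    and child: "(s',p') \<in> delta ar R L s (hd_sym (subt t (p @ L s)))"
  shows "config_inv t s' (p @ p') (insert (p @ L s) h)"
proof -
  define x where "x = p @ L s"
  define f where "f = hd_sym (subt t x)"
  define G where "G = abs_goals s p"
  have reach: "s \<in> reach F ar R L" and hist: "valid_history t h" and front: "obls_at_frontier t h G"
    and cons: "goals_consistent t h G" and compl: "goals_complete R t h G"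
    using inv unfolding config_inv_def G_def by blast+
  have st: "state_inv R G" using state_inv_abs_goals_reach[OF reach] unfolding G_def .
  have x: "x \<in> obl_pos G" using label_obl_pos[OF reach] unfolding x_def G_def .
  have xt: "in_poss x t" and fx: "fun_sym (subt t x) = Some f"
    using config_inv_label[OF inv gr] unfolding x_def f_def by blast+
  have sub: "abs_goals s' (p @ p') \<subseteq> deriv_abs ar R G f x"
    and closed: "overlap_closed (abs_goals s' (p @ p')) (deriv_abs ar R G f x)"
    using delta_abs_goals[OF reachable_state_inv[OF reach] finite_rules lhss_nonvar child]
    unfolding x_def f_def G_def by blast+
  have "f \<in> F" using wf_subt[OF wft xt] fx by (cases "subt t x") auto
  then have "s' \<in> reach F ar R L" using reach.step[OF reach _ child] unfolding f_def x_def by blast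
  moreover have "valid_history t (insert x h)"
    using hist front x xt unfolding valid_history_def obls_at_frontier_def by blast
  moreover have "obls_at_frontier t (insert x h) (abs_goals s' (p @ p'))"
    using obls_at_frontier_deriv_abs[OF hist front x wft fx] by (rule obls_at_frontier_mono[OF sub])
  moreover have "goals_consistent t (insert x h) (abs_goals s' (p @ p'))"
    using goals_consistent_deriv_abs[OF _ wf_lhss cons fx] st unfolding state_inv_def
    by (blast intro: goals_consistent_mono[OF sub])
  moreover have "goals_complete R t (insert x h) (abs_goals s' (p @ p'))"
    using goals_complete_deriv_abs[OF _ _ x fx compl] st unfolding state_inv_def
    by (blast intro: goals_complete_overlap_closed[OF _ sub closed])
  ultimately show ?thesis unfolding config_inv_def x_def by blast
qed

lemma pending_child:
  assumes "s \<in> reach F ar R L" "(s',p') \<in> delta ar R L s f"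
    and "pending (abs_goals s' (p @ p')) l y"
  shows "pending (abs_goals s p) l y"
proof (rule pending_deriv_abs[OF label_obl_pos[OF assms(1)]])
  show "pending (deriv_abs ar R (abs_goals s p) f (p @ L s)) l y"
    using delta_abs_goals(1)[OF reachable_state_inv[OF assms(1)] finite_rules lhss_nonvar assms(2)]
    by (rule pending_mono) (rule assms(3))
qed

lemma pending_deriv_abs_child:
  assumes reach: "s \<in> reach F ar R L" and pend: "pending (deriv_abs ar R (abs_goals s p) f (p @ L s)) l y"
  shows "\<exists>(s',p')\<in>delta ar R L s f. pending (abs_goals s' (p @ p')) l y"
proof -
  note in_child = deriv_abs_in_delta[where ar=ar and L=L and p=p and f=f,
      OF reachable_state_inv[OF reach] finite_rules lhss_nonvar]
  from pend consider (announced) MO where "(MO,(l,y)) \<in> deriv_abs ar R (abs_goals s p) f (p @ L s)"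
    | (below) z where "z \<in> obl_pos (deriv_abs ar R (abs_goals s p) f (p @ L s))" "strict_prefix z y"
    unfolding pending_def by blast
  then show ?thesis
  proof cases
    case announced
    from in_child[OF this] show ?thesis unfolding pending_def by blast
  next
    case below
    then obtain MO ma l' where g: "(MO,ma) \<in> deriv_abs ar R (abs_goals s p) f (p @ L s)" "(l',z) \<in> MO"
      unfolding obl_pos_def by blast
    from in_child[OF g(1)] obtain s' p' where "(s',p') \<in> delta ar R L s f" "(MO,ma) \<in> abs_goals s' (p @ p')"
      by blast
    with g(2) below(2) show ?thesis unfolding pending_def by (blast intro: obl_posI)
  qed
qed

lemma pending_expand:
  assumes inv: "config_inv t s p h" and wft: "wf_term F ar t" and gr: "ground t"
    and l: "l \<in> lhss R" and y: "in_poss y t" and sk: "skeleton_matches l t y"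
    and pend: "pending (abs_goals s p) l y"
  shows "(\<forall>r. (l,r) \<in> R \<longrightarrow> ((l,r),y) \<in> matches ar R L s p t) \<or>
    (\<exists>(s',p')\<in>delta ar R L s (hd_sym (subt t (p @ L s))). pending (abs_goals s' (p @ p')) l y)"
proof -
  define f where "f = hd_sym (subt t (p @ L s))"
  have reach: "s \<in> reach F ar R L" using inv unfolding config_inv_def by blast
  have st: "state_inv R (abs_goals s p)" using state_inv_abs_goals_reach[OF reach] .
  have fx: "fun_sym (subt t (p @ L s)) = Some f" using config_inv_label[OF inv gr] unfolding f_def by blast
  have wf: "wf_goals R (abs_goals s p)" using st unfolding state_inv_def by blast
  from pend consider (announced) MO where "(MO,(l,y)) \<in> abs_goals s p"
    | (below) z where "z \<in> obl_pos (abs_goals s p)" "strict_prefix z y"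
    unfolding pending_def by blast
  then have "pending (deriv_abs ar R (abs_goals s p) f (p @ L s)) l y \<or>
      (\<forall>r. (l,r) \<in> R \<longrightarrow> ((l,r),y) \<in> matches ar R L s p t)"
  proof cases
    case (announced MO)
    from pending_announced_deriv_abs[OF wf wf_lhss announced sk fx] show ?thesis
    proof (elim disjE exE conjE)
      fix xs assume xs: "MO = {(Fun f xs, p @ L s)}" "length xs = ar f" "\<forall>u\<in>set xs. \<exists>v. u = Var v"
      have g: "({(Fun f xs, p @ L s)}, (l,y)) \<in> abs_goals s p" using announced xs(1) by simp
      have "((l,r),y) \<in> matches ar R L s p t" if "(l,r) \<in> R" for r
        using singleton_goal_matches[where L=L and p=p and s=s and ar=ar, OF g xs(2,3) that f_def] .
      then show ?thesis by blast
    qed blast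
  next
    case below
    have "has_fresh_goals R (abs_goals s p)" using st unfolding state_inv_def by blast
    from pending_below_deriv_abs[OF this l below wft y fx] show ?thesis ..
  qed
  then show ?thesis
    unfolding f_def[symmetric] using pending_deriv_abs_child[OF reach, of p f l y] by blast
qed


lemma covers_child:
  "s \<in> reach F ar R L \<Longrightarrow> (s',p') \<in> delta ar R L s f \<Longrightarrow> covers (s,p) (s', p @ p')"
  using pending_child unfolding covers_def by simp

section \<open>The invariant of Normalize\<close>

text \<open>The last conjunct ensures that pruning a subtree back to its root loses none of the
  matches pending below it.\<close>

definition run_inv :: "('f,'v) term \<Rightarrow> ('f,'v) redex set \<Rightarrow> ('f,'v) ctree \<Rightarrow> bool" where
  "run_inv t reds ct \<longleftrightarrow> wf_term F ar t \<and> ground t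
   \<and> (\<forall>(a,w)\<in>paths ct. config_inv t (fst (root w)) (snd (root w)) (read_pos L ` set a))
   \<and> (\<forall>rx\<in>reds. \<exists>(s,p)\<in>nodes ct. rx \<in> matches ar R L s p t)
   \<and> (\<forall>l y. l \<in> lhss R \<longrightarrow> in_poss y t \<longrightarrow> skeleton_matches l t y \<longrightarrow>
        (\<forall>r. (l,r) \<in> R \<longrightarrow> ((l,r),y) \<in> reds) \<or> (\<exists>(s,p)\<in>buds ct. pending (abs_goals s p) l y))
   \<and> (\<forall>c\<in>subtrees ct. \<forall>x\<in>nodes c \<union> buds c. covers (root c) x)"

lemma run_invD:
  assumes "run_inv t reds ct"
  shows run_inv_wf: "wf_term F ar t" and run_inv_ground: "ground t"
    and run_inv_config: "\<And>a w. (a,w) \<in> paths ct \<Longrightarrow> config_inv t (fst (root w)) (snd (root w)) (read_pos L ` set a)"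
    and run_inv_reds: "\<And>rx. rx \<in> reds \<Longrightarrow> \<exists>(s,p)\<in>nodes ct. rx \<in> matches ar R L s p t"
    and run_inv_complete: "\<And>l y. l \<in> lhss R \<Longrightarrow> in_poss y t \<Longrightarrow> skeleton_matches l t y \<Longrightarrow>
        (\<forall>r. (l,r) \<in> R \<longrightarrow> ((l,r),y) \<in> reds) \<or> (\<exists>(s,p)\<in>buds ct. pending (abs_goals s p) l y)"
    and run_inv_covers: "\<And>c x. c \<in> subtrees ct \<Longrightarrow> x \<in> nodes c \<union> buds c \<Longrightarrow> covers (root c) x"
  using assms unfolding run_inv_def by blast+

lemma config_inv_s0: "config_inv t (s0 R) [] {}"
proof -
  have obl: "obl_pos (s0 R) \<subseteq> {[]}" unfolding obl_pos_def s0_mem by auto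
  have "goals_consistent t {} (s0 R)" unfolding goals_consistent_def s0_mem by auto
  moreover have "goals_complete R t {} (s0 R)" using obl unfolding goals_complete_def by auto
  moreover have "obls_at_frontier t {} (s0 R)" using obl unfolding obls_at_frontier_def by auto
  ultimately show ?thesis
    unfolding config_inv_def valid_history_def by (simp add: reach.init abs_goals_def shift_goal_def)
qed

lemma run_inv_init:
  assumes "wf_term F ar t" "ground t"
  shows "run_inv t {} (Bud (s0 R) [])"
proof -
  have "pending (s0 R) l y" if "l \<in> lhss R" for l y
  proof (cases y)
    case Nil
    then show ?thesis using that unfolding pending_def s0_mem by blast
  next
    case Cons
    then have "strict_prefix [] y" by simp
    moreover have "[] \<in> obl_pos (s0 R)" using that unfolding obl_pos_def s0_mem by blast
    ultimately show ?thesis unfolding pending_def by blast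
  qed
  then show ?thesis
    using assms config_inv_s0 covers_refl unfolding run_inv_def by (auto simp: abs_goals_def shift_goal_def)
qed

lemma run_inv_final_NF:
  assumes "run_inv t {} ct" "buds ct = {}"
  shows "NF R t"
  unfolding NF_def
proof
  assume "\<exists>l r p \<sigma>. (l, r) \<in> R \<and> in_poss p t \<and> subt t p = subst \<sigma> l"
  then obtain l r p \<sigma> where redex: "(l, r) \<in> R" "in_poss p t" "subt t p = subst \<sigma> l" by blast
  then have "l \<in> lhss R" by (force simp: lhss_def)
  from run_inv_complete[OF assms(1) this redex(2) subst_imp_skeleton_matches[OF redex(2,3)]]
  show False using assms(2) redex(1) by blast
qed

section \<open>Growing the configuration tree\<close>

definition children :: "('f,'v) state \<Rightarrow> pos \<Rightarrow> ('f,'v) term \<Rightarrow> ('f,'v) ctree fset" where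
  "children s p t =
     Abs_fset {Bud s' (p @ p') | s' p'. (s',p') \<in> delta ar R L s (hd_sym (subt t (p @ L s)))}"

lemma grow_children: "grow ar R L ct s p t = grow_rep (children s p t) s p ct"
  by (simp add: grow_def children_def)

lemma fset_children:
  assumes "s \<in> reach F ar R L"
  shows "fset (children s p t) =
    {Bud s' (p @ p') | s' p'. (s',p') \<in> delta ar R L s (hd_sym (subt t (p @ L s)))}"
proof -
  have "{Bud s' (p @ p') | s' p'. (s',p') \<in> delta ar R L s (hd_sym (subt t (p @ L s)))} =
      (\<lambda>(s',p'). Bud s' (p @ p')) ` delta ar R L s (hd_sym (subt t (p @ L s)))" by auto
  then have "finite {Bud s' (p @ p') | s' p'. (s',p') \<in> delta ar R L s (hd_sym (subt t (p @ L s)))}"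
    using finite_delta[OF reachable_state_inv[OF assms] finite_rules lhss_nonvar] by simp
  then show ?thesis unfolding children_def by (simp add: Abs_fset_inverse)
qed

lemma bud_config_inv:
  assumes "run_inv t reds ct" "(s,p) \<in> buds ct"
  obtains h where "config_inv t s p h"
  using assms run_inv_config paths_bud by fastforce

lemma config_inv_grow:
  assumes inv: "run_inv t reds ct" and bud: "(s,p) \<in> buds ct"
    and path: "(a',w') \<in> paths (grow ar R L ct s p t)"
  shows "config_inv t (fst (root w')) (snd (root w')) (read_pos L ` set a')"
proof -
  obtain h where "config_inv t s p h" using bud_config_inv[OF inv bud] .
  then have reach: "s \<in> reach F ar R L" unfolding config_inv_def by blast
  note ch = fset_children[OF reach, of p t]
  have "\<forall>b\<in>fset (children s p t). \<not> is_node b" unfolding ch by auto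
  from paths_grow_origin[OF path[unfolded grow_children] this] show ?thesis
  proof (elim disjE exE conjE)
    fix a w assume h: "(a,w) \<in> paths ct" "a' = map (grow_rep (children s p t) s p) a"
      "w' = grow_rep (children s p t) s p w"
    show ?thesis using run_inv_config[OF inv h(1)] h(2,3) by (simp add: grow_root image_image read_pos_grow)
  next
    fix a assume h: "(a, Bud s p) \<in> paths ct" "w' \<in> fset (children s p t)"
      "a' = map (grow_rep (children s p t) s p) a @ [Node s p (children s p t)]"
    from h(2) obtain s' p' where w': "w' = Bud s' (p @ p')" "(s',p') \<in> delta ar R L s (hd_sym (subt t (p @ L s)))"
      unfolding ch by blast
    have "read_pos L (Node s p (children s p t)) = p @ L s" by (simp add: read_pos_def)
    then have "read_pos L ` set a' = insert (p @ L s) (read_pos L ` set a)"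
      using h(3) by (simp add: image_image read_pos_grow)
    moreover have "config_inv t s p (read_pos L ` set a)" using run_inv_config[OF inv h(1)] by simp
    ultimately show ?thesis
      using config_inv_child[OF _ run_inv_wf[OF inv] run_inv_ground[OF inv] w'(2)] w'(1) by simp
  qed
qed

lemma pending_grow:
  assumes inv: "run_inv t reds ct" and bud: "(s,p) \<in> buds ct"
    and l: "l \<in> lhss R" and y: "in_poss y t" and sk: "skeleton_matches l t y"
    and pend: "(s1,p1) \<in> buds ct" "pending (abs_goals s1 p1) l y"
  shows "(\<forall>r. (l,r) \<in> R \<longrightarrow> ((l,r),y) \<in> matches ar R L s p t) \<or>
    (\<exists>(s',p')\<in>buds (grow ar R L ct s p t). pending (abs_goals s' p') l y)"
proof (cases "(s1,p1) = (s,p)")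
  case False
  then show ?thesis using pend grow_buds_keep[OF pend(1)] unfolding grow_children by blast
next
  case True
  obtain h where vi: "config_inv t s p h" using bud_config_inv[OF inv bud] .
  then have reach: "s \<in> reach F ar R L" unfolding config_inv_def by blast
  have "(s', p @ p') \<in> buds (grow ar R L ct s p t)"
    if "(s',p') \<in> delta ar R L s (hd_sym (subt t (p @ L s)))" for s' p'
    using grow_buds_new[OF bud, of "Bud s' (p @ p')" "children s p t"] that
    unfolding grow_children fset_children[OF reach] by auto
  then show ?thesis
    using pending_expand[OF vi run_inv_wf[OF inv] run_inv_ground[OF inv] l y sk] pend(2) True by fast
qed

lemma covers_grow:
  assumes inv: "run_inv t reds ct" and bud: "(s,p) \<in> buds ct"
    and c': "c' \<in> subtrees (grow ar R L ct s p t)" and x: "x \<in> nodes c' \<union> buds c'"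
  shows "covers (root c') x"
proof -
  obtain h where "config_inv t s p h" using bud_config_inv[OF inv bud] .
  then have reach: "s \<in> reach F ar R L" unfolding config_inv_def by blast
  note ch = fset_children[OF reach, of p t]
  from grow_subtrees[OF c'[unfolded grow_children]] show ?thesis
  proof (elim disjE conjE bexE)
    fix c assume c: "c \<in> subtrees ct" "c' = grow_rep (children s p t) s p c"
    from grow_nodes_buds[OF x[unfolded c(2)]] show ?thesis
    proof (elim disjE bexE conjE)
      assume "x \<in> nodes c \<union> buds c"
      then show ?thesis using run_inv_covers[OF inv c(1)] c(2) by (simp add: grow_root)
    next
      fix b assume sp: "(s,p) \<in> buds c" and b: "b \<in> fset (children s p t)" "x \<in> nodes b \<union> buds b"
      from b obtain s' p' where "x = (s', p @ p')" "(s',p') \<in> delta ar R L s (hd_sym (subt t (p @ L s)))"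
        unfolding ch by auto
      then have "covers (s,p) x" using covers_child[OF reach] by blast
      moreover have "covers (root c) (s,p)" using run_inv_covers[OF inv c(1)] sp by blast
      ultimately show ?thesis using c(2) covers_trans by (simp add: grow_root) blast
    qed
  next
    assume "c' \<in> (\<Union>b\<in>fset (children s p t). subtrees b)"
    then show ?thesis using x covers_refl unfolding ch by auto
  qed
qed

lemma run_inv_grow:
  assumes inv: "run_inv t reds ct" and bud: "(s,p) \<in> buds ct"
  shows "run_inv t (reds \<union> matches ar R L s p t) (grow ar R L ct s p t)"
proof -
  have "\<exists>(s1,p1)\<in>nodes (grow ar R L ct s p t). rx \<in> matches ar R L s1 p1 t"
    if "rx \<in> reds \<union> matches ar R L s p t" for rx
    using that run_inv_reds[OF inv] nodes_grow bud_in_nodes_grow[OF bud]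
    unfolding grow_children by blast
  moreover have "(\<forall>r. (l,r) \<in> R \<longrightarrow> ((l,r),y) \<in> reds \<union> matches ar R L s p t) \<or>
      (\<exists>(s',p')\<in>buds (grow ar R L ct s p t). pending (abs_goals s' p') l y)"
    if "l \<in> lhss R" "in_poss y t" "skeleton_matches l t y" for l y
    using run_inv_complete[OF inv that] pending_grow[OF inv bud that] by blast
  ultimately show ?thesis
    using run_inv_wf[OF inv] run_inv_ground[OF inv] config_inv_grow[OF inv bud] covers_grow[OF inv bud]
    unfolding run_inv_def by blast
qed

section \<open>Rewriting and pruning\<close>

lemma config_inv_replace_at:
  assumes inv: "config_inv t s p h" and q: "in_poss q t" and h: "\<forall>y\<in>h. \<not> prefix q y"
  shows "config_inv (replace_at t q u) s p h"
proof -
  define t' where "t' = replace_at t q u"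
  have hist: "valid_history t h" and front: "obls_at_frontier t h (abs_goals s p)"
    and cons: "goals_consistent t h (abs_goals s p)" and compl: "goals_complete R t h (abs_goals s p)"
    using inv unfolding config_inv_def by blast+
  have same: "in_poss y t' \<and> fun_sym (subt t' y) = fun_sym (subt t y)" if "y \<in> h" for y
    using replace_at_other[OF q, of y u] h that hist unfolding t'_def valid_history_def by blast
  have "valid_history t' h" using hist same unfolding valid_history_def by blast
  moreover have "in_poss z t'" if "z \<in> obl_pos (abs_goals s p)" for z
  proof (cases "prefix q z")
    case True
    show ?thesis
    proof (cases "z = q")
      case True
      then show ?thesis using replace_at_same[OF q] unfolding t'_def by simp
    next
      case False
      \<comment> \<open>the parent of z has been read, so it cannot lie below q\<close>
      with \<open>prefix q z\<close> have "strict_prefix q z" by (simp add: strict_prefix_def)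
      then have "z \<noteq> []" "prefix q (butlast z)" using strict_prefix_butlast by auto
      moreover have "butlast z \<in> h" using front that \<open>z \<noteq> []\<close> unfolding obls_at_frontier_def by blast
      ultimately show ?thesis using h by blast
    qed
  next
    case False
    then show ?thesis using replace_at_other[OF q, of z u] front that
      unfolding t'_def obls_at_frontier_def by blast
  qed
  then have "obls_at_frontier t' h (abs_goals s p)" using front unfolding obls_at_frontier_def by blast
  moreover have "goals_consistent t' h (abs_goals s p)"
    using cons same unfolding goals_consistent_def by metis
  moreover have "goals_complete R t' h (abs_goals s p)"
    using compl same unfolding goals_complete_def by metis
  ultimately show ?thesis using inv unfolding config_inv_def t'_def by blast
qed

lemma history_unread_not_below:
  assumes inv: "run_inv t reds ct" and path: "(a,w) \<in> paths ct" and noread: "\<forall>v\<in>set a. \<not> reads_at L q v"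
  shows "\<forall>y\<in>read_pos L ` set a. \<not> prefix q y"
proof (intro ballI notI)
  fix y assume y: "y \<in> read_pos L ` set a" "prefix q y"
  have "valid_history t (read_pos L ` set a)" using run_inv_config[OF inv path] unfolding config_inv_def by blast
  then have "q \<in> read_pos L ` set a"
    using prefix_closed_butlast[OF _ y] unfolding valid_history_def by blast
  then obtain v where "v \<in> set a" "read_pos L v = q" by blast
  moreover have "is_node v" using paths_props[OF path] \<open>v \<in> set a\<close> by blast
  ultimately show False using noread reads_at_iff_read_pos by blast
qed

lemma config_inv_prune:
  assumes inv: "run_inv t reds ct" and q: "in_poss q t" and path: "(a',w') \<in> paths (prune L q ct)"
  shows "config_inv (replace_at t q u) (fst (root w')) (snd (root w')) (read_pos L ` set a')"
proof -
  obtain a w where aw: "(a, w) \<in> paths ct" "\<forall>v\<in>set a. \<not> reads_at L q v"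
    "a' = map (prune L q) a" "w' = prune L q w"
    using paths_prune_origin[OF path] by blast
  have "read_pos L ` set a' = read_pos L ` set a" using aw(3) by (auto simp: image_image read_pos_prune)
  then show ?thesis
    using config_inv_replace_at[OF run_inv_config[OF inv aw(1)] q history_unread_not_below[OF inv aw(1,2)]] aw(4)
    by (simp add: prune_root)
qed

lemma reported_redex:
  assumes inv: "config_inv t s p h" and gr: "ground t"
    and g: "({(Fun f xs, p @ L s)}, (l,q)) \<in> abs_goals s p" and f: "f = hd_sym (subt t (p @ L s))"
    and xs: "\<forall>u\<in>set xs. \<exists>v. u = Var v"
  shows "skeleton_matches l t q" "in_poss q t" "p @ L s = q \<or> q \<in> h"
proof -
  define x where "x = p @ L s"
  have reach: "s \<in> reach F ar R L" and hist: "valid_history t h"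
    and cons: "goals_consistent t h (abs_goals s p)" using inv unfolding config_inv_def by blast+
  have wf: "wf_goals R (abs_goals s p)" using state_inv_abs_goals_reach[OF reach] unfolding state_inv_def by blast
  have xt: "in_poss x t" and fx: "fun_sym (subt t x) = Some f"
    using config_inv_label[OF inv gr] unfolding x_def f by blast+
  obtain wx where wx: "l \<in> lhss R" "x = q @ wx" "fun_pos l wx" "subt l wx = Fun f xs"
    using wf_goalsD[OF wf g[folded x_def]] by blast
  have match: "in_poss (q @ w) t \<and> fun_sym (subt t (q @ w)) = fun_sym (subt l w) \<and> (w = [] \<longrightarrow> x = q \<or> q \<in> h)"
    if w: "fun_pos l w" for w
    using goals_consistentD[OF cons g w]
  proof (elim disjE exE conjE)
    fix l' z assume "(l',z) \<in> {(Fun f xs, p @ L s)}" "prefix z (q @ w)"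
    then obtain rr where rr: "w = wx @ rr" using wx(2) unfolding x_def by (auto simp: prefix_def)
    show ?thesis
    proof (cases rr)
      case Nil
      then show ?thesis using xt fx wx rr by auto
    next
      \<comment> \<open>below x, l only has variables\<close>
      case (Cons i rr')
      have "fun_pos l (wx @ [i])" using fun_pos_prefix[OF w] rr Cons by simp
      then have "in_poss [i] (Fun f xs)" "fun_sym (subt (Fun f xs) [i]) \<noteq> None"
        using wx by (auto simp: fun_pos_def in_poss_append subt_append)
      then have "xs ! (i - 1) \<in> set xs" "fun_sym (xs ! (i - 1)) \<noteq> None" by auto
      then show ?thesis using xs by fastforce
    qed
  next
    assume "q @ w \<in> h" "fun_sym (subt t (q @ w)) = fun_sym (subt l w)"
    then show ?thesis using hist unfolding valid_history_def by auto
  qed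
  then show "skeleton_matches l t q" unfolding skeleton_matches_def by blast
  have "fun_pos l []" using lhss_nonvar wx(1) unfolding lhss_nonvar_def fun_pos_def by simp
  from match[OF this] show "in_poss q t" "p @ L s = q \<or> q \<in> h" unfolding x_def by simp_all
qed

lemma reds_sound:
  assumes inv: "run_inv t reds ct" and rx: "((l,r),q) \<in> reds"
  shows "(l,r) \<in> R" "skeleton_matches l t q" "in_poss q t" "\<exists>c\<in>subtrees ct. reads_at L q c"
proof -
  obtain s p where node: "(s,p) \<in> nodes ct" and m: "((l,r),q) \<in> matches ar R L s p t"
    using run_inv_reds[OF inv rx] by blast
  obtain a cs where path: "(a, Node s p cs) \<in> paths ct" using node paths_node by blast
  define f where "f = hd_sym (subt t (p @ L s))"
  from m obtain q0 xs where q0: "q = p @ q0" "(l,r) \<in> R" "\<forall>u\<in>set xs. \<exists>v. u = Var v"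
    "({(Fun f xs, L s)}, (l, q0)) \<in> s"
    unfolding matches_def out_def f_def by blast
  have g: "({(Fun f xs, p @ L s)}, (l,q)) \<in> abs_goals s p"
    using q0(1,4) unfolding abs_goals_mem by fastforce
  have inv_node: "config_inv t s p (read_pos L ` set a)" using run_inv_config[OF inv path] by simp
  note red = reported_redex[OF inv_node run_inv_ground[OF inv] g f_def q0(3)]
  show "(l,r) \<in> R" "skeleton_matches l t q" "in_poss q t" using q0(2) red(1,2) by blast+
  from red(3) show "\<exists>c\<in>subtrees ct. reads_at L q c"
  proof
    assume "p @ L s = q"
    then show ?thesis using paths_props[OF path] by force
  next
    assume "q \<in> read_pos L ` set a"
    then obtain v where "v \<in> set a" "read_pos L v = q" by blast
    then show ?thesis using paths_props[OF path] reads_at_iff_read_pos by blast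
  qed
qed

lemma matches_unread_replace_at:
  assumes inv: "run_inv t reds ct" and q: "in_poss q t" and path: "(a, Node s p cs) \<in> paths ct"
    and noread: "\<forall>v\<in>set a \<union> {Node s p cs}. \<not> reads_at L q v"
  shows "matches ar R L s p (replace_at t q u) = matches ar R L s p t"
proof -
  have inv_node: "config_inv t s p (read_pos L ` set a)" using run_inv_config[OF inv path] by simp
  have x: "in_poss (p @ L s) t" "fun_sym (subt t (p @ L s)) \<noteq> None"
    using config_inv_label[OF inv_node run_inv_ground[OF inv]] by simp_all
  have "\<not> prefix q (p @ L s)"
  proof
    \<comment> \<open>the label lies outside the rewritten subterm, as its parent has been read\<close>
    assume "prefix q (p @ L s)"
    moreover have "p @ L s \<noteq> q" using noread by simp
    ultimately have "strict_prefix q (p @ L s)" by (simp add: strict_prefix_def)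
    then have "p @ L s \<noteq> []" "prefix q (butlast (p @ L s))" using strict_prefix_butlast by auto
    moreover have "p @ L s \<in> obl_pos (abs_goals s p)"
      using label_obl_pos inv_node unfolding config_inv_def by blast
    then have "butlast (p @ L s) \<in> read_pos L ` set a"
      using inv_node \<open>p @ L s \<noteq> []\<close> unfolding config_inv_def obls_at_frontier_def by blast
    ultimately show False using history_unread_not_below[OF inv path] noread by blast
  qed
  then have "fun_sym (subt (replace_at t q u) (p @ L s)) = fun_sym (subt t (p @ L s))"
    using replace_at_other[OF q, of "p @ L s" u] x(1) by blast
  then have "hd_sym (subt (replace_at t q u) (p @ L s)) = hd_sym (subt t (p @ L s))"
    using hd_sym_eq x(2) by metis
  then show ?thesis unfolding matches_def by simp
qed

lemma reds_prune:
  assumes inv: "run_inv t reds ct" and q: "in_poss q t"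
    and rx: "rx \<in> reds - \<Union>{matches ar R L s q' t | s q'. (s,q') \<in> nodes_at L ct q}"
  shows "\<exists>(s,p)\<in>nodes (prune L q ct). rx \<in> matches ar R L s p (replace_at t q u)"
proof -
  obtain s p where node: "(s,p) \<in> nodes ct" and m: "rx \<in> matches ar R L s p t"
    using run_inv_reds[OF inv DiffD1[OF rx]] by blast
  obtain a cs where path: "(a, Node s p cs) \<in> paths ct" using node paths_node by blast
  have noread: "\<forall>v\<in>set a \<union> {Node s p cs}. \<not> reads_at L q v"
  proof (intro ballI notI)
    fix v assume v: "v \<in> set a \<union> {Node s p cs}" and "reads_at L q v"
    moreover have "v \<in> subtrees ct" "Node s p cs \<in> subtrees v"
      using paths_props[OF path] v subtrees_self by auto
    ultimately have "root (Node s p cs) \<in> nodes_at L ct q"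
      using nodes_at_intro[of v ct L q "Node s p cs"] by simp
    then have "matches ar R L s p t \<in> {matches ar R L s q' t | s q'. (s,q') \<in> nodes_at L ct q}" by auto
    with rx m show False by blast
  qed
  then have "(map (prune L q) a, Node s p (fimage (prune L q) cs)) \<in> paths (prune L q ct)"
    using paths_prune_unread[OF path, of L q] by simp
  then have "(s,p) \<in> nodes (prune L q ct)" using paths_node[of s p "prune L q ct"] by blast
  then show ?thesis using matches_unread_replace_at[OF inv q path noread] m by blast
qed

lemma pending_below_reader:
  assumes inv: "run_inv t reds ct" and c: "c \<in> subtrees ct" "reads_at L q c"
    and x: "x \<in> nodes c \<union> buds c" and pend: "pending (abs_goals (fst x) (snd x)) l y"
  shows "\<exists>(s,p)\<in>buds (prune L q ct). pending (abs_goals s p) l y"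
proof -
  obtain c0 where c0: "c0 \<in> subtrees ct" "c \<in> subtrees c0" "root c0 \<in> buds (prune L q ct)"
    using prune_first_reader[OF c] by blast
  have "x \<in> nodes c0 \<union> buds c0" using subtrees_nodes[OF c0(2)] x by blast
  then have "covers (root c0) x" using run_inv_covers[OF inv c0(1)] by blast
  then show ?thesis using pend c0(3) unfolding covers_def by (cases "root c0") auto
qed

lemma pending_prune_untouched:
  assumes inv: "run_inv t reds ct" and l: "l \<in> lhss R" and y: "in_poss y t" and sk: "skeleton_matches l t y"
  shows "(\<forall>r. (l,r) \<in> R \<longrightarrow> ((l,r),y) \<in> reds - \<Union>{matches ar R L s q' t | s q'. (s,q') \<in> nodes_at L ct q})
    \<or> (\<exists>(s,p)\<in>buds (prune L q ct). pending (abs_goals s p) l y)"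
  using run_inv_complete[OF inv l y sk]
proof (elim disjE bexE)
  assume reds: "\<forall>r. (l,r) \<in> R \<longrightarrow> ((l,r),y) \<in> reds"
  show ?thesis
  proof (cases "\<exists>r s q'. (l,r) \<in> R \<and> (s,q') \<in> nodes_at L ct q \<and> ((l,r),y) \<in> matches ar R L s q' t")
    case True
    \<comment> \<open>the match was reported by a node below a reader of q, so its goal is pending there\<close>
    then obtain r s q' c where c: "c \<in> subtrees ct" "snd (root c) @ L (fst (root c)) = q"
      "(s,q') \<in> nodes c" and m: "((l,r),y) \<in> matches ar R L s q' t"
      unfolding nodes_at_def by blast
    have "reads_at L q c" using c(2,3) by (cases c) auto
    from m obtain y0 g where "y = q' @ y0" "({g}, (l,y0)) \<in> s" unfolding matches_def out_def by blast
    then have "pending (abs_goals s q') l y"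
      unfolding pending_def abs_goals_mem by (blast intro: exI[of _ "shift_obl q' {g}"])
    then show ?thesis using pending_below_reader[OF inv c(1) \<open>reads_at L q c\<close>, where x="(s,q')"] c(3) by auto
  qed (use reds in blast)
next
  fix b assume b: "b \<in> buds ct" "case b of (s,p) \<Rightarrow> pending (abs_goals s p) l y"
  obtain s p where bsp: "b = (s,p)" by (cases b)
  from prune_buds[where L=L and q=q, OF b(1)[unfolded bsp]] show ?thesis
  proof
    assume "(s,p) \<in> buds (prune L q ct)"
    then show ?thesis using b(2) bsp by blast
  next
    assume "\<exists>c\<in>subtrees ct. reads_at L q c \<and> (s,p) \<in> buds c"
    then show ?thesis using pending_below_reader[OF inv, where x="(s,p)"] b(2) bsp by auto
  qed
qed

lemma pending_prune:
  assumes inv: "run_inv t reds ct" and q: "in_poss q t" and reader: "c \<in> subtrees ct" "reads_at L q c"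
    and l: "l \<in> lhss R" and y: "in_poss y (replace_at t q u)" and sk: "skeleton_matches l (replace_at t q u) y"
  shows "(\<forall>r. (l,r) \<in> R \<longrightarrow> ((l,r),y) \<in> reds - \<Union>{matches ar R L s q' t | s q'. (s,q') \<in> nodes_at L ct q})
    \<or> (\<exists>(s,p)\<in>buds (prune L q ct). pending (abs_goals s p) l y)"
proof -
  obtain c0 where c0: "reads_at L q c0" "root c0 \<in> buds (prune L q ct)"
    using prune_first_reader[OF reader] by blast
  then obtain s p cs where "c0 = Node s p cs" and lab: "p @ L s = q" by (cases c0) auto
  with c0 have bud: "(s,p) \<in> buds (prune L q ct)" by simp
  then obtain a where "(a, Bud s p) \<in> paths (prune L q ct)" using paths_bud by blast
  from config_inv_prune[OF inv q this]
  have inv_bud: "config_inv (replace_at t q u) s p (read_pos L ` set a)" by simp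
  then have reach: "s \<in> reach F ar R L" unfolding config_inv_def by blast
  have qG: "q \<in> obl_pos (abs_goals s p)" using label_obl_pos[OF reach, of p] unfolding lab .
  have fresh: "has_fresh_goals R (abs_goals s p)"
    using state_inv_abs_goals_reach[OF reach] unfolding state_inv_def by blast
  consider (below) "prefix q y" | (above) w where "q = y @ w" "w \<noteq> []" "fun_pos l w"
    | (apart) "\<And>w. fun_pos l w \<Longrightarrow> \<not> prefix q (y @ w)"
    using fun_pos_prefix by (fastforce simp: prefix_append)
  then show ?thesis
  proof cases
    case below
    then show ?thesis using pending_below_obligation[OF fresh l qG] bud by blast
  next
    case above
    \<comment> \<open>the bud reading q announces every left-hand side whose skeleton passes through q and
      agrees with t on the history\<close>
    have "goals_complete R (replace_at t q u) (read_pos L ` set a) (abs_goals s p)"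
      using inv_bud unfolding config_inv_def by blast
    from goals_completeD[OF this qG l above] sk obtain MO l' where "(MO,(l,y)) \<in> abs_goals s p"
      unfolding skeleton_matches_def by blast
    then show ?thesis using bud unfolding pending_def by blast
  next
    case apart
    have "fun_pos l []" using lhss_nonvar l unfolding lhss_nonvar_def fun_pos_def by simp
    then have "in_poss y t" using y apart replace_at_other[OF q] by fastforce
    moreover have "skeleton_matches l t y" using sk skeleton_matches_replace_at[OF q apart] by blast
    ultimately show ?thesis using pending_prune_untouched[OF inv l] by blast
  qed
qed

lemma covers_prune:
  assumes inv: "run_inv t reds ct" and c': "c' \<in> subtrees (prune L q ct)" and x: "x \<in> nodes c' \<union> buds c'"
  shows "covers (root c') x"
proof -
  obtain c where c: "c \<in> subtrees ct" "c' = prune L q c" using prune_subtrees[OF c'] by blast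
  then have "x \<in> nodes c \<union> buds c" using prune_nodes_buds x by blast
  then show ?thesis using run_inv_covers[OF inv c(1)] c(2) by (simp add: prune_root)
qed

lemma run_inv_replace_at:
  assumes inv: "run_inv t reds ct" and q: "in_poss q t" and reader: "\<exists>c\<in>subtrees ct. reads_at L q c"
    and u: "wf_term F ar u" "ground u"
  shows "run_inv (replace_at t q u)
    (reds - \<Union>{matches ar R L s q' t | s q'. (s,q') \<in> nodes_at L ct q}) (prune L q ct)"
  (is "run_inv ?t' ?reds' ?ct'")
proof -
  have "wf_term F ar ?t'" using wf_replace_at[OF run_inv_wf[OF inv] u(1) q] .
  moreover have "ground ?t'"
    using vars_replace_at[OF q, of u] run_inv_ground[OF inv] u(2) unfolding ground_def by blast
  moreover have "\<forall>(a,w)\<in>paths ?ct'. config_inv ?t' (fst (root w)) (snd (root w)) (read_pos L ` set a)"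
    using config_inv_prune[OF inv q] by blast
  moreover have "\<forall>rx\<in>?reds'. \<exists>(s,p)\<in>nodes ?ct'. rx \<in> matches ar R L s p ?t'"
    using reds_prune[OF inv q] by blast
  moreover have "\<forall>l y. l \<in> lhss R \<longrightarrow> in_poss y ?t' \<longrightarrow> skeleton_matches l ?t' y \<longrightarrow>
      (\<forall>r. (l,r) \<in> R \<longrightarrow> ((l,r),y) \<in> ?reds') \<or> (\<exists>(s,p)\<in>buds ?ct'. pending (abs_goals s p) l y)"
    using pending_prune[OF inv q] reader by blast
  moreover have "\<forall>c\<in>subtrees ?ct'. \<forall>x\<in>nodes c \<union> buds c. covers (root c) x"
    using covers_prune[OF inv] by blast
  ultimately show ?thesis unfolding run_inv_def by blast
qed

lemma run_inv_rewrite: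
  assumes inv: "run_inv t reds ct" and rx: "(rl,q) \<in> reds"
  shows "(t, rewrite_at t rl q) \<in> rstep R"
    "run_inv (rewrite_at t rl q)
      (reds - \<Union>{matches ar R L s q' t | s q'. (s,q') \<in> nodes_at L ct q}) (prune L q ct)"
proof -
  obtain l r where rl: "rl = (l,r)" by (cases rl)
  note sound = reds_sound[OF inv rx[unfolded rl]]
  have lr: "wf_term F ar l" "wf_term F ar r" "vars r \<subseteq> vars l" "linear l"
    using rule_wf_linear[OF sound(1)] by blast+
  obtain \<sigma> where "subt t q = subst \<sigma> l"
    using skeleton_matches_imp_subst[OF lr(4,1) run_inv_wf[OF inv] sound(2)] .
  then obtain \<sigma>' where \<sigma>': "subt t q = subst \<sigma>' l" "rewrite_at t rl q = replace_at t q (subst \<sigma>' r)"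
    using rewrite_at_subst unfolding rl by metis
  show "(t, rewrite_at t rl q) \<in> rstep R" using rewrite_at_rstep[OF sound(1,3) \<sigma>'(1)] unfolding rl .
  have "wf_term F ar (subst \<sigma>' r) \<and> ground (subst \<sigma>' r)"
    using wf_ground_subst_rhs[OF run_inv_wf[OF inv] run_inv_ground[OF inv] sound(3) \<sigma>'(1) lr(2,3)] .
  then show "run_inv (rewrite_at t rl q)
      (reds - \<Union>{matches ar R L s q' t | s q'. (s,q') \<in> nodes_at L ct q}) (prune L q ct)"
    using run_inv_replace_at[OF inv sound(3,4)] \<sigma>'(2) by simp
qed

lemma norm_run_correct:
  assumes "norm_run ar R L sel t reds ct t'" "run_inv t reds ct" "strategy sel"
  shows "(t, t') \<in> (rstep R)\<^sup>* \<and> NF R t'"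
  using assms
proof (induction rule: norm_run.induct)
  case (stop ct reds t)
  then show ?case using run_inv_final_NF by blast
next
  case (conf ct reds s p t t')
  have "(s,p) \<in> buds ct" using conf.prems(2) conf.hyps(1,2) unfolding strategy_def by (metis sum.simps(5))
  from conf.IH[OF run_inv_grow[OF conf.prems(1) this] conf.prems(2)] show ?case .
next
  case (red ct reds rl p t t')
  have "(rl,p) \<in> reds" using red.prems(2) red.hyps(1,2) unfolding strategy_def by (metis sum.simps(6))
  note step = run_inv_rewrite[OF red.prems(1) this]
  from red.IH[OF step(2) red.prems(2)] step(1) show ?case by (meson converse_rtrancl_into_rtrancl)
qed

end

theorem corollary1:
  fixes F :: "'f set" and ar :: "'f \<Rightarrow> nat"
    and R :: "(('f,'v) term \<times> ('f,'v) term) set"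
    and L :: "('f,'v) state \<Rightarrow> pos"
    and sel :: "('f,'v) selector"
    and t0 t :: "('f,'v) term"
  assumes "finite F"
    and "trs F ar R"
    and "left_linear R"
    and "valid_label F ar R L"
    and "wf_term F ar t0"
    and "ground t0"
    and "strategy sel"
    and "normalize_returns ar R L sel t0 t"
  shows "(t0, t) \<in> (rstep R)\<^sup>* \<and> NF R t"
proof -
  interpret set_automaton F ar R L using assms(2-4) by unfold_locales
  show ?thesis
    using norm_run_correct[OF assms(8)[unfolded normalize_returns_def] run_inv_init[OF assms(5,6)] assms(7)] .
qed

end
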